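(* Let $\theta\mapsto P_\theta$ ($\theta$ in an open subset of $\mathbb{R}^p$) be a family of regular $X\times X$ transition matrices, continuously differentiable in $\theta$, with $(P_\theta)_{ij}=0$ implying $\nabla_\theta(P_\theta)_{ij}=0$, and with stationary distribution $\pi_\theta$. Fix $c\in\mathbb{R}^X$ and an initial distribution $\pi_0$ independent of $\theta$. Simulate $x_0\sim\pi_0$ and $x_1,\dots,x_N$ with transition matrix $P_\theta$, set $S_0=0$, $S_k=S_{k-1}+\nabla_\theta (P_\theta)_{x_{k-1}x_k}/(P_\theta)_{x_{k-1}x_k}$ for $k=1,\dots,N$, and define the score function estimator $\widehat{\nabla_\theta C}_N=\frac1N\sum_{k=1}^N c(x_k)S_k$. Then there exist constants $K_1,K_2$ independent of $N$ such that for all $N\ge1$: (a) $\bigl\|\mathbb{E}\{\widehat{\nabla_\theta C}_N\}-\nabla_\theta(c'\pi_\theta)\bigr\|\le K_1/N$ (bias $O(1/N)$); (b) the variance (trace of the covariance matrix) of $\widehat{\nabla_\theta C}_N$ is at most $K_2N$ (variance $O(N)$).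
   Context: A transition matrix is regular if some power has all entries strictly positive; $\pi_\theta$ is its unique stationary distribution. Gradients with respect to $\theta$ are taken entrywise. *)

theory Defs
  imports "HOL-Analysis.Analysis"
begin

text \<open>Finite state space X is a finite type 'x; theta ranges over real^'p.
  Transition matrices are real^'x^'x with (P $ i $ j) = probability of i to j.\<close>

fun mat_pow :: "real^'x^'x \<Rightarrow> nat \<Rightarrow> real^'x^'x" where
  "mat_pow A 0 = mat 1"
| "mat_pow A (Suc n) = A ** mat_pow A n"

definition transition_matrix :: "real^'x::finite^'x \<Rightarrow> bool" where
  "transition_matrix P \<longleftrightarrow> (\<forall>i j. P $ i $ j \<ge> 0) \<and> (\<forall>i. (\<Sum>j\<in>UNIV. P $ i $ j) = 1)"

definition regular :: "real^'x::finite^'x \<Rightarrow> bool" where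
  "regular P \<longleftrightarrow> (\<exists>n. \<forall>i j. mat_pow P n $ i $ j > 0)"

definition prob_dist :: "('x::finite \<Rightarrow> real) \<Rightarrow> bool" where
  "prob_dist \<mu> \<longleftrightarrow> (\<forall>x. \<mu> x \<ge> 0) \<and> (\<Sum>x\<in>UNIV. \<mu> x) = 1"

definition is_stationary :: "real^'x::finite^'x \<Rightarrow> ('x \<Rightarrow> real) \<Rightarrow> bool" where
  "is_stationary P \<pi> \<longleftrightarrow> prob_dist \<pi> \<and> (\<forall>j. (\<Sum>i\<in>UNIV. \<pi> i * P $ i $ j) = \<pi> j)"

text \<open>The (unique, for regular P) stationary distribution.\<close>
definition stat_dist :: "real^'x::finite^'x \<Rightarrow> ('x \<Rightarrow> real)" where
  "stat_dist P = (THE \<pi>. is_stationary P \<pi>)"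

definition grad :: "(real^'p \<Rightarrow> real) \<Rightarrow> real^'p \<Rightarrow> real^'p" where
  "grad f \<theta> = (\<chi> k. frechet_derivative f (at \<theta>) (axis k 1))"

definition C1_on :: "(real^'p \<Rightarrow> real) \<Rightarrow> (real^'p) set \<Rightarrow> bool" where
  "C1_on f U \<longleftrightarrow> (\<exists>g. (\<forall>\<theta>\<in>U. (f has_derivative (\<lambda>h. g \<theta> \<bullet> h)) (at \<theta>)) \<and> continuous_on U g)"

definition paths :: "nat \<Rightarrow> 'x list set" where
  "paths N = {xs. length xs = Suc N}"

definition path_prob :: "('x \<Rightarrow> real) \<Rightarrow> real^'x^'x \<Rightarrow> nat \<Rightarrow> 'x list \<Rightarrow> real" where
  "path_prob \<pi>0 P N xs = \<pi>0 (xs ! 0) * (\<Prod>k\<in>{1..N}. P $ (xs ! (k - 1)) $ (xs ! k))"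

definition path_expect :: "('x \<Rightarrow> real) \<Rightarrow> real^'x^'x \<Rightarrow> nat \<Rightarrow> ('x list \<Rightarrow> 'b::real_vector) \<Rightarrow> 'b" where
  "path_expect \<pi>0 P N F = (\<Sum>xs\<in>paths N. path_prob \<pi>0 P N xs *\<^sub>R F xs)"

definition score :: "(real^'p \<Rightarrow> real^'x^'x) \<Rightarrow> real^'p \<Rightarrow> 'x list \<Rightarrow> nat \<Rightarrow> real^'p" where
  "score P \<theta> xs k = (\<Sum>m\<in>{1..k}.
      (1 / P \<theta> $ (xs ! (m - 1)) $ (xs ! m)) *\<^sub>R grad (\<lambda>t. P t $ (xs ! (m - 1)) $ (xs ! m)) \<theta>)"

definition sf_estimator :: "(real^'p \<Rightarrow> real^'x^'x) \<Rightarrow> real^'p \<Rightarrow> ('x \<Rightarrow> real) \<Rightarrow> nat \<Rightarrow> 'x list \<Rightarrow> real^'p" where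
  "sf_estimator P \<theta> c N xs = (1 / real N) *\<^sub>R (\<Sum>k\<in>{1..N}. c (xs ! k) *\<^sub>R score P \<theta> xs k)"

text \<open>Trace of the covariance matrix = E ||Z - E Z||^2.\<close>
definition trace_cov :: "('x \<Rightarrow> real) \<Rightarrow> real^'x^'x \<Rightarrow> nat \<Rightarrow> ('x list \<Rightarrow> real^'p) \<Rightarrow> real" where
  "trace_cov \<pi>0 P N Z = path_expect \<pi>0 P N (\<lambda>xs. (norm (Z xs - path_expect \<pi>0 P N Z))\<^sup>2)"

end

theory Submission
  imports Defs
begin

text \<open>Regularity gives a power of \<open>P \<theta>\<close> whose entries are all at least some \<open>\<epsilon> > 0\<close>, and Doeblin's
  argument turns this into a geometric contraction of oscillations.  This yields existence,
  uniqueness and positivity of the stationary distribution \<open>\<pi>\<close>; as the solution of a nonsingular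
  linear system it is differentiable in \<open>\<theta>\<close> by Cramer's rule.  Differentiating \<open>\<pi> = \<pi> P\<close> and
  unrolling it \<open>k\<close> times writes \<open>\<nabla>(c'\<pi>)\<close> as the sum over \<open>b < k\<close> of
  \<open>\<Sum>i j. \<pi> i (P^b c) j \<nabla>P i j\<close> up to an error \<open>O(\<rho>^k)\<close>.  The expectation of \<open>c(x k) S k\<close> has the
  same form, with \<open>\<pi>\<close> replaced by the laws of the states \<open>x 0, \<dots>, x (k-1)\<close>, which converge to \<open>\<pi>\<close>
  geometrically; averaging these errors over \<open>k \<le> N\<close> gives bias \<open>O(1/N)\<close>.
  For the variance, truncated solutions of the Poisson equation \<open>h - P h = c - c'\<pi>\<close> split
  \<open>\<Sum>k. c(x k) S k\<close> into two martingales with increments of size \<open>O(N)\<close> and a remainder of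
  size \<open>O(N)\<close>; orthogonality of martingale increments bounds its second moment by \<open>O(N^3)\<close>.\<close>

section \<open>Contraction of oscillation by regular transition matrices\<close>

definition mat_act :: "real^'x::finite^'x \<Rightarrow> ('x \<Rightarrow> real) \<Rightarrow> 'x \<Rightarrow> real" where
  "mat_act A f i = (\<Sum>j\<in>UNIV. A$i$j * f j)"

lemma mat_act_mult: "mat_act (A ** B) f = mat_act A (mat_act B f)"
  unfolding mat_act_def matrix_matrix_mult_def
  by (auto simp: sum_distrib_left sum_distrib_right mult.assoc intro!: ext sum.swap)

lemma mat_act_mat_1: "mat_act (mat 1) f = f"
proof
  fix i
  have "mat_act (mat 1) f i = (\<Sum>j\<in>UNIV. if i = j then f j else 0)"
    unfolding mat_act_def mat_def by (rule sum.cong) auto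
  then show "mat_act (mat 1) f i = f i" by simp
qed

lemma mat_act_sum: "mat_act A (\<lambda>j. \<Sum>l\<in>L. f l j) i = (\<Sum>l\<in>L. mat_act A (f l) i)"
  unfolding mat_act_def by (simp add: sum_distrib_left sum.swap[of _ L])

lemma mat_act_indicator: "mat_act A (\<lambda>j. if j = j0 then 1 else 0) i = A $ i $ j0"
  by (simp add: mat_act_def if_distrib cong: if_cong)

lemma mat_act_diff_const:
  "transition_matrix A \<Longrightarrow> mat_act A (\<lambda>j. f j - a) i = mat_act A f i - a"
  unfolding mat_act_def transition_matrix_def
  by (simp add: right_diff_distrib sum_subtractf flip: sum_distrib_right)

lemma mat_act_bounds:
  assumes "transition_matrix A" "\<And>j. a \<le> f j" "\<And>j. f j \<le> b"
  shows "a \<le> mat_act A f i" "mat_act A f i \<le> b"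
proof -
  have "(\<Sum>j\<in>UNIV. A$i$j * a) \<le> mat_act A f i" "mat_act A f i \<le> (\<Sum>j\<in>UNIV. A$i$j * b)"
    using assms unfolding mat_act_def transition_matrix_def by (auto intro!: sum_mono mult_left_mono)
  then show "a \<le> mat_act A f i" "mat_act A f i \<le> b"
    using assms(1) by (simp_all add: transition_matrix_def flip: sum_distrib_right)
qed

lemma mat_pow_Suc_right: "mat_pow A (Suc n) = mat_pow A n ** A"
  by (induction n) (simp_all add: matrix_mul_lid matrix_mul_rid matrix_mul_assoc)

lemma mat_pow_add: "mat_pow A (m + n) = mat_pow A m ** mat_pow A n"
  by (induction m) (simp_all add: matrix_mul_lid matrix_mul_assoc)

lemma transition_matrix_mult:
  assumes "transition_matrix A" "transition_matrix B"
  shows "transition_matrix (A ** B)"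
proof -
  have "(\<Sum>j\<in>UNIV. (A ** B) $ i $ j) = (\<Sum>k\<in>UNIV. A$i$k * (\<Sum>j\<in>UNIV. B$k$j))" for i
    unfolding matrix_matrix_mult_def vec_lambda_beta sum_distrib_left by (rule sum.swap)
  moreover have "(A ** B)$i$j \<ge> 0" for i j
    using assms unfolding transition_matrix_def matrix_matrix_mult_def by (auto intro!: sum_nonneg)
  ultimately show ?thesis using assms unfolding transition_matrix_def by simp
qed

lemma transition_matrix_mat_1: "transition_matrix (mat 1 :: real^'x::finite^'x)"
  unfolding transition_matrix_def mat_def by (auto simp: if_distrib cong: if_cong)

lemma transition_matrix_mat_pow: "transition_matrix A \<Longrightarrow> transition_matrix (mat_pow A n)"
  by (induction n) (simp_all add: transition_matrix_mat_1 transition_matrix_mult)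

definition osc_contraction :: "real^'x::finite^'x \<Rightarrow> real \<Rightarrow> bool" where
  "osc_contraction A \<kappa> \<longleftrightarrow> (\<forall>f a b. (\<forall>j. a \<le> f j \<and> f j \<le> b) \<longrightarrow>
     (\<exists>a' b'. a \<le> a' \<and> b' \<le> b \<and> (\<forall>i. a' \<le> mat_act A f i \<and> mat_act A f i \<le> b') \<and>
        b' - a' \<le> \<kappa> * (b - a)))"

lemma osc_contractionD:
  assumes "osc_contraction A \<kappa>" "\<forall>j. a \<le> f j \<and> f j \<le> b"
  obtains a' b' where "a \<le> a'" "b' \<le> b" "\<forall>i. a' \<le> mat_act A f i \<and> mat_act A f i \<le> b'"
    "b' - a' \<le> \<kappa> * (b - a)"
  using assms unfolding osc_contraction_def by meson

lemma osc_contractionI: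
  assumes "\<And>f a b. \<forall>j. a \<le> f j \<and> f j \<le> b \<Longrightarrow> \<exists>a' b'. a \<le> a' \<and> b' \<le> b \<and>
     (\<forall>i. a' \<le> mat_act A f i \<and> mat_act A f i \<le> b') \<and> b' - a' \<le> \<kappa> * (b - a)"
  shows "osc_contraction A \<kappa>"
  using assms unfolding osc_contraction_def by (intro allI impI)

lemma osc_contraction_transition:
  assumes "transition_matrix A"
  shows "osc_contraction A 1"
proof (rule osc_contractionI)
  fix f :: "'a \<Rightarrow> real" and a b
  assume f: "\<forall>j. a \<le> f j \<and> f j \<le> b"
  then have "\<forall>i. a \<le> mat_act A f i \<and> mat_act A f i \<le> b"
    using mat_act_bounds[OF assms, of a f b] by blast
  then show "\<exists>a' b'. a \<le> a' \<and> b' \<le> b \<and> (\<forall>i. a' \<le> mat_act A f i \<and> mat_act A f i \<le> b') \<and>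
      b' - a' \<le> 1 * (b - a)"
    by (intro exI[of _ a] exI[of _ b]) simp
qed

lemma osc_contraction_mono:
  assumes "osc_contraction A \<kappa>" "\<kappa> \<le> \<kappa>'"
  shows "osc_contraction A \<kappa>'"
proof (rule osc_contractionI)
  fix f :: "'a \<Rightarrow> real" and a b
  assume f: "\<forall>j. a \<le> f j \<and> f j \<le> b"
  then have "a \<le> f j" "f j \<le> b" for j by auto
  then have "0 \<le> b - a" using order_trans[of a "f undefined" b] by simp
  obtain a' b' where ab: "a \<le> a'" "b' \<le> b" "\<forall>i. a' \<le> mat_act A f i \<and> mat_act A f i \<le> b'"
    "b' - a' \<le> \<kappa> * (b - a)" by (rule osc_contractionD[OF assms(1) f])
  have "\<kappa> * (b - a) \<le> \<kappa>' * (b - a)" using assms(2) \<open>0 \<le> b - a\<close> by (rule mult_right_mono)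
  then show "\<exists>a' b'. a \<le> a' \<and> b' \<le> b \<and> (\<forall>i. a' \<le> mat_act A f i \<and> mat_act A f i \<le> b') \<and>
      b' - a' \<le> \<kappa>' * (b - a)" using ab by (intro exI[of _ a'] exI[of _ b']) simp
qed

lemma osc_contraction_mult:
  assumes A: "osc_contraction A \<kappa>" and B: "osc_contraction B \<kappa>'" and "0 \<le> \<kappa>"
  shows "osc_contraction (A ** B) (\<kappa> * \<kappa>')"
proof (rule osc_contractionI)
  fix f :: "'a \<Rightarrow> real" and a b
  assume f: "\<forall>j. a \<le> f j \<and> f j \<le> b"
  obtain a1 b1 where ab1: "a \<le> a1" "b1 \<le> b" "\<forall>i. a1 \<le> mat_act B f i \<and> mat_act B f i \<le> b1"
    "b1 - a1 \<le> \<kappa>' * (b - a)" by (rule osc_contractionD[OF B f])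
  obtain a2 b2 where ab2: "a1 \<le> a2" "b2 \<le> b1"
    "\<forall>i. a2 \<le> mat_act A (mat_act B f) i \<and> mat_act A (mat_act B f) i \<le> b2"
    "b2 - a2 \<le> \<kappa> * (b1 - a1)" by (rule osc_contractionD[OF A ab1(3)])
  have "\<kappa> * (b1 - a1) \<le> \<kappa> * (\<kappa>' * (b - a))" using ab1(4) \<open>0 \<le> \<kappa>\<close> by (rule mult_left_mono)
  then show "\<exists>a' b'. a \<le> a' \<and> b' \<le> b \<and> (\<forall>i. a' \<le> mat_act (A ** B) f i \<and> mat_act (A ** B) f i \<le> b') \<and>
      b' - a' \<le> \<kappa> * \<kappa>' * (b - a)"
    using ab1 ab2 unfolding mat_act_mult by (intro exI[of _ a2] exI[of _ b2]) simp
qed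

lemma osc_contraction_mat_pow_blocks:
  assumes Q: "transition_matrix Q" and n: "osc_contraction (mat_pow Q n) \<kappa>" and "0 \<le> \<kappa>"
  shows "osc_contraction (mat_pow Q (q * n + r)) (\<kappa> ^ q)"
proof (induction q)
  case 0
  show ?case using osc_contraction_transition[OF transition_matrix_mat_pow[OF Q]] by simp
next
  case (Suc q)
  have "mat_pow Q (Suc q * n + r) = mat_pow Q n ** mat_pow Q (q * n + r)"
    unfolding mult_Suc add.assoc by (rule mat_pow_add)
  then show ?case using osc_contraction_mult[OF n Suc \<open>0 \<le> \<kappa>\<close>] by simp
qed

text \<open>Doeblin's argument: if every entry of \<open>A\<close> is at least \<open>\<epsilon>\<close>, then \<open>A f\<close> is the fixed average
  \<open>\<epsilon> * (\<Sum>j. f j)\<close> plus a sub-stochastic average of total weight \<open>1 - CARD('x) * \<epsilon>\<close>.\<close>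
lemma osc_contraction_doeblin:
  fixes A :: "real^'x::finite^'x"
  assumes A: "transition_matrix A" and eps: "\<And>i j. \<epsilon> \<le> A$i$j" "0 < \<epsilon>"
  shows "osc_contraction A (1 - real CARD('x) * \<epsilon>)"
proof (rule osc_contractionI)
  fix f :: "'x \<Rightarrow> real" and a b
  assume f: "\<forall>j. a \<le> f j \<and> f j \<le> b"
  define \<kappa> where "\<kappa> = 1 - real CARD('x) * \<epsilon>"
  define s where "s = (\<Sum>j\<in>UNIV. f j)"
  have split: "mat_act A f i = (\<Sum>j\<in>UNIV. (A$i$j - \<epsilon>) * f j) + \<epsilon> * s" for i
    unfolding mat_act_def s_def by (simp add: left_diff_distrib sum_subtractf sum_distrib_left)
  have weight: "(\<Sum>j\<in>UNIV. (A$i$j - \<epsilon>) * y) = \<kappa> * y" for i y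
    using A by (simp add: transition_matrix_def sum_subtractf \<kappa>_def flip: sum_distrib_right)
  have "(\<Sum>j\<in>UNIV. (A$i$j - \<epsilon>) * a) \<le> (\<Sum>j\<in>UNIV. (A$i$j - \<epsilon>) * f j)"
    "(\<Sum>j\<in>UNIV. (A$i$j - \<epsilon>) * f j) \<le> (\<Sum>j\<in>UNIV. (A$i$j - \<epsilon>) * b)" for i
    using eps f by (auto intro!: sum_mono mult_left_mono)
  then have "\<kappa> * a + \<epsilon> * s \<le> mat_act A f i" "mat_act A f i \<le> \<kappa> * b + \<epsilon> * s" for i
    unfolding split weight by auto
  moreover have "real CARD('x) * a \<le> s" "s \<le> real CARD('x) * b"
    using sum_mono[of UNIV "\<lambda>_. a" f] sum_mono[of UNIV f "\<lambda>_. b"] f by (auto simp: s_def)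
  then have "\<epsilon> * (real CARD('x) * a) \<le> \<epsilon> * s" "\<epsilon> * s \<le> \<epsilon> * (real CARD('x) * b)"
    using eps(2) by (simp_all add: mult_left_mono)
  then have "a \<le> \<kappa> * a + \<epsilon> * s" "\<kappa> * b + \<epsilon> * s \<le> b"
    by (simp_all add: \<kappa>_def algebra_simps)
  moreover have "(\<kappa> * b + \<epsilon> * s) - (\<kappa> * a + \<epsilon> * s) = \<kappa> * (b - a)"
    by (simp add: right_diff_distrib)
  ultimately show "\<exists>a' b'. a \<le> a' \<and> b' \<le> b \<and> (\<forall>i. a' \<le> mat_act A f i \<and> mat_act A f i \<le> b') \<and>
      b' - a' \<le> \<kappa> * (b - a)"
    by (intro exI[of _ "\<kappa> * a + \<epsilon> * s"] exI[of _ "\<kappa> * b + \<epsilon> * s"]) simp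
qed

lemma regular_mat_pow_ge:
  fixes Q :: "real^'x::finite^'x"
  assumes Q: "transition_matrix Q" and R: "regular Q"
  obtains n \<epsilon> where "1 \<le> n" "0 < \<epsilon>" "\<forall>i j. \<epsilon> \<le> mat_pow Q n $ i $ j"
proof -
  obtain n0 where pos: "\<And>i j. mat_pow Q n0 $ i $ j > 0" using R unfolding regular_def by blast
  define B where "B = mat_pow Q (Suc n0)"
  have Bpos: "B $ i $ j > 0" for i j
  proof -
    have "(\<Sum>k\<in>UNIV. Q$i$k) = 1" using Q by (simp add: transition_matrix_def)
    then obtain k where "Q$i$k \<noteq> 0" by (metis sum.neutral zero_neq_one)
    then have "0 < Q$i$k" using Q unfolding transition_matrix_def by (metis order_le_less)
    then have "0 < Q$i$k * mat_pow Q n0 $ k $ j" using pos by simp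
    also have "\<dots> \<le> (\<Sum>k\<in>UNIV. Q$i$k * mat_pow Q n0 $ k $ j)"
      by (rule member_le_sum) (use Q pos in \<open>auto simp: transition_matrix_def less_imp_le\<close>)
    also have "\<dots> = B $ i $ j" by (simp add: B_def matrix_matrix_mult_def)
    finally show ?thesis .
  qed
  define \<epsilon> where "\<epsilon> = Min (range (\<lambda>(i, j). B $ i $ j))"
  have fin: "finite (range (\<lambda>(i, j). B $ i $ j))" by simp
  have "\<epsilon> \<in> range (\<lambda>(i, j). B $ i $ j)" unfolding \<epsilon>_def by (rule Min_in[OF fin]) simp
  then have "0 < \<epsilon>" using Bpos by auto
  moreover have "\<epsilon> \<le> B $ i $ j" for i j
    unfolding \<epsilon>_def by (rule Min_le[OF fin]) (auto intro: image_eqI[where x="(i, j)"])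
  ultimately show ?thesis using that[of "Suc n0" \<epsilon>] by (simp add: B_def)
qed

definition geometric_contraction :: "real^'x::finite^'x \<Rightarrow> real \<Rightarrow> real \<Rightarrow> bool" where
  "geometric_contraction Q C \<rho> \<longleftrightarrow>
     0 < C \<and> 0 < \<rho> \<and> \<rho> < 1 \<and> (\<forall>m. osc_contraction (mat_pow Q m) (C * \<rho> ^ m))"

lemma power_div_le_root_power:
  fixes \<kappa> :: real
  assumes "0 < \<kappa>" "\<kappa> \<le> 1" "0 < n"
  shows "\<kappa> ^ (m div n) \<le> (1 / \<kappa>) * root n \<kappa> ^ m"
proof -
  have r: "0 < root n \<kappa>" "root n \<kappa> \<le> 1" "root n \<kappa> ^ n = \<kappa>"
    using assms by (auto simp: real_root_pow_pos)
  have "m \<le> n * (m div n) + n"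
    using assms(3) by (metis add_le_cancel_left div_mult_mod_eq less_imp_le_nat mod_less_divisor mult.commute)
  then have "\<kappa> ^ (m div n) * \<kappa> = root n \<kappa> ^ (n * (m div n) + n)"
    by (simp add: power_add power_mult r(3))
  also have "\<dots> \<le> root n \<kappa> ^ m" using r \<open>m \<le> n * (m div n) + n\<close> by (intro power_decreasing) auto
  finally show ?thesis using assms(1) by (simp add: field_simps)
qed

lemma regular_geometric_contraction:
  fixes Q :: "real^'x::finite^'x"
  assumes Q: "transition_matrix Q" and R: "regular Q"
  obtains C \<rho> where "geometric_contraction Q C \<rho>"
proof -
  obtain n \<epsilon> where n: "1 \<le> n" and \<epsilon>: "0 < \<epsilon>" "\<forall>i j. \<epsilon> \<le> mat_pow Q n $ i $ j"
    using regular_mat_pow_ge[OF Q R] .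
  define \<kappa> where "\<kappa> = max (1 - real CARD('x) * \<epsilon>) (1 / 2)"
  have \<kappa>: "0 < \<kappa>" "\<kappa> < 1" using \<epsilon>(1) by (auto simp: \<kappa>_def)
  have "osc_contraction (mat_pow Q n) \<kappa>"
    using osc_contraction_doeblin[OF transition_matrix_mat_pow[OF Q] \<epsilon>(2)[rule_format] \<epsilon>(1)]
    by (rule osc_contraction_mono) (simp add: \<kappa>_def)
  then have blocks: "osc_contraction (mat_pow Q m) (\<kappa> ^ (m div n))" for m
    using osc_contraction_mat_pow_blocks[OF Q _ _, of n \<kappa> "m div n" "m mod n"] \<kappa> by simp
  have "osc_contraction (mat_pow Q m) ((1 / \<kappa>) * root n \<kappa> ^ m)" for m
    using blocks[of m] power_div_le_root_power[of \<kappa> n m] \<kappa> n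
    by (simp add: osc_contraction_mono)
  moreover have "0 < root n \<kappa>" "root n \<kappa> < 1" using \<kappa> n by (auto simp: real_root_lt_1_iff)
  ultimately show ?thesis using \<kappa> that[of "1 / \<kappa>" "root n \<kappa>"] by (simp add: geometric_contraction_def)
qed

section \<open>Stationary distributions\<close>

lemma invariant_mat_pow:
  fixes Q :: "real^'x::finite^'x"
  assumes inv: "\<And>j. (\<Sum>i\<in>UNIV. \<mu> i * Q$i$j) = \<mu> j"
  shows "(\<Sum>i\<in>UNIV. \<mu> i * mat_pow Q m $ i $ j) = \<mu> j"
proof (induction m arbitrary: j)
  case 0
  then show ?case by (simp add: mat_def if_distrib cong: if_cong)
next
  case (Suc m)
  have "(\<Sum>i\<in>UNIV. \<mu> i * mat_pow Q (Suc m) $ i $ j)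
      = (\<Sum>i\<in>UNIV. \<Sum>k\<in>UNIV. \<mu> i * (mat_pow Q m $ i $ k * Q $ k $ j))"
    unfolding mat_pow_Suc_right matrix_matrix_mult_def vec_lambda_beta sum_distrib_left ..
  also have "\<dots> = (\<Sum>k\<in>UNIV. (\<Sum>i\<in>UNIV. \<mu> i * mat_pow Q m $ i $ k) * Q $ k $ j)"
    by (subst sum.swap) (simp add: sum_distrib_right mult.assoc)
  also have "\<dots> = \<mu> j" using Suc inv by simp
  finally show ?case .
qed

lemma invariant_mat_act:
  fixes Q :: "real^'x::finite^'x"
  assumes "\<And>j. (\<Sum>i\<in>UNIV. \<mu> i * Q$i$j) = \<mu> j"
  shows "(\<Sum>i\<in>UNIV. \<mu> i * mat_act (mat_pow Q m) f i) = (\<Sum>j\<in>UNIV. \<mu> j * f j)"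
proof -
  have "(\<Sum>i\<in>UNIV. \<mu> i * mat_act (mat_pow Q m) f i)
      = (\<Sum>j\<in>UNIV. (\<Sum>i\<in>UNIV. \<mu> i * mat_pow Q m $ i $ j) * f j)"
    unfolding mat_act_def sum_distrib_left sum_distrib_right
    by (subst sum.swap) (simp add: mult.assoc)
  then show ?thesis using invariant_mat_pow[OF assms] by simp
qed

lemma le_geometric_imp_nonpos:
  fixes x C \<rho> :: real
  assumes "0 < \<rho>" "\<rho> < 1" "\<And>m. x \<le> C * \<rho> ^ m"
  shows "x \<le> 0"
proof -
  have "(\<lambda>m. C * \<rho> ^ m) \<longlonglongrightarrow> C * 0"
    by (intro tendsto_mult tendsto_const LIMSEQ_power_zero) (use assms in auto)
  then show ?thesis using assms(3) by (intro LIMSEQ_le_const[of "\<lambda>m. C * \<rho> ^ m"]) auto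
qed

lemma abs_weighted_sum_minus_le:
  fixes \<mu> v :: "'x::finite \<Rightarrow> real"
  assumes "\<forall>i. a \<le> v i \<and> v i \<le> b"
  shows "\<bar>(\<Sum>i\<in>UNIV. \<mu> i * v i) - a * (\<Sum>i\<in>UNIV. \<mu> i)\<bar> \<le> (\<Sum>i\<in>UNIV. \<bar>\<mu> i\<bar>) * (b - a)"
proof -
  have "\<bar>(\<Sum>i\<in>UNIV. \<mu> i * v i) - a * (\<Sum>i\<in>UNIV. \<mu> i)\<bar> = \<bar>\<Sum>i\<in>UNIV. \<mu> i * (v i - a)\<bar>"
    by (simp add: sum_distrib_left algebra_simps sum_subtractf)
  also have "\<dots> \<le> (\<Sum>i\<in>UNIV. \<bar>\<mu> i * (v i - a)\<bar>)" by (rule sum_abs)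
  also have "\<dots> \<le> (\<Sum>i\<in>UNIV. \<bar>\<mu> i\<bar> * (b - a))"
    by (rule sum_mono) (use assms in \<open>auto simp: abs_mult intro!: mult_left_mono\<close>)
  finally show ?thesis by (simp add: sum_distrib_right)
qed

text \<open>Testing an invariant signed measure against the point mass at \<open>j0\<close>, which
  \<open>Q ^ m\<close> flattens to nearly a constant \<open>a \<ge> 0\<close>.\<close>
lemma invariant_near_multiple_of_mass:
  fixes Q :: "real^'x::finite^'x"
  assumes c: "geometric_contraction Q C \<rho>" and inv: "\<And>j. (\<Sum>i\<in>UNIV. \<mu> i * Q$i$j) = \<mu> j"
  obtains a where "0 \<le> a" "\<bar>\<mu> j0 - a * (\<Sum>i\<in>UNIV. \<mu> i)\<bar> \<le> (\<Sum>i\<in>UNIV. \<bar>\<mu> i\<bar>) * C * \<rho> ^ m"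
proof -
  define e where "e j = (if j = j0 then 1 else 0 :: real)" for j
  have "\<forall>j. 0 \<le> e j \<and> e j \<le> 1" by (simp add: e_def)
  then obtain a b where ab: "0 \<le> a" "\<forall>i. a \<le> mat_act (mat_pow Q m) e i \<and> mat_act (mat_pow Q m) e i \<le> b"
    "b - a \<le> C * \<rho> ^ m * (1 - 0)"
    using c unfolding geometric_contraction_def by (metis osc_contractionD)
  have "\<mu> j0 = (\<Sum>i\<in>UNIV. \<mu> i * mat_act (mat_pow Q m) e i)"
    by (simp add: invariant_mat_act[OF inv] e_def if_distrib cong: if_cong)
  then have "\<bar>\<mu> j0 - a * (\<Sum>i\<in>UNIV. \<mu> i)\<bar> \<le> (\<Sum>i\<in>UNIV. \<bar>\<mu> i\<bar>) * (b - a)"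
    using abs_weighted_sum_minus_le[OF ab(2)] by simp
  also have "\<dots> \<le> (\<Sum>i\<in>UNIV. \<bar>\<mu> i\<bar>) * (C * \<rho> ^ m)"
    using ab(3) by (intro mult_left_mono) (auto intro: sum_nonneg)
  finally show thesis using that ab(1) by (simp add: mult.assoc)
qed

lemma invariant_zero_mass_eq_0:
  fixes Q :: "real^'x::finite^'x"
  assumes c: "geometric_contraction Q C \<rho>"
    and inv: "\<And>j. (\<Sum>i\<in>UNIV. \<mu> i * Q$i$j) = \<mu> j" and "(\<Sum>i\<in>UNIV. \<mu> i) = 0"
  shows "\<mu> j0 = 0"
proof -
  have "\<bar>\<mu> j0\<bar> \<le> ((\<Sum>i\<in>UNIV. \<bar>\<mu> i\<bar>) * C) * \<rho> ^ m" for m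
    using invariant_near_multiple_of_mass[OF c inv, of j0 m] assms(3) by auto
  then have "\<bar>\<mu> j0\<bar> \<le> 0"
    using c unfolding geometric_contraction_def by (intro le_geometric_imp_nonpos[of \<rho>]) auto
  then show ?thesis by simp
qed

lemma invariant_unit_mass_nonneg:
  fixes Q :: "real^'x::finite^'x"
  assumes c: "geometric_contraction Q C \<rho>"
    and inv: "\<And>j. (\<Sum>i\<in>UNIV. \<mu> i * Q$i$j) = \<mu> j" and "(\<Sum>i\<in>UNIV. \<mu> i) = 1"
  shows "0 \<le> \<mu> j0"
proof -
  have "- \<mu> j0 \<le> ((\<Sum>i\<in>UNIV. \<bar>\<mu> i\<bar>) * C) * \<rho> ^ m" for m
  proof -
    obtain a where "0 \<le> a" "\<bar>\<mu> j0 - a\<bar> \<le> (\<Sum>i\<in>UNIV. \<bar>\<mu> i\<bar>) * C * \<rho> ^ m"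
      using invariant_near_multiple_of_mass[OF c inv, of j0 m] assms(3) by auto
    then show ?thesis by linarith
  qed
  then have "- \<mu> j0 \<le> 0"
    using c unfolding geometric_contraction_def by (intro le_geometric_imp_nonpos[of \<rho>]) auto
  then show ?thesis by simp
qed

lemma stationary_mat_act_dist:
  fixes Q :: "real^'x::finite^'x"
  assumes c: "geometric_contraction Q C \<rho>" and st: "is_stationary Q \<mu>"
    and f: "\<forall>j. a \<le> f j \<and> f j \<le> b"
  shows "\<bar>mat_act (mat_pow Q m) f i - (\<Sum>j\<in>UNIV. \<mu> j * f j)\<bar> \<le> C * \<rho> ^ m * (b - a)"
proof -
  obtain a' b' where ab: "\<forall>i. a' \<le> mat_act (mat_pow Q m) f i \<and> mat_act (mat_pow Q m) f i \<le> b'"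
      "b' - a' \<le> C * \<rho> ^ m * (b - a)"
    using c f unfolding geometric_contraction_def by (metis osc_contractionD)
  have inv: "\<And>j. (\<Sum>i\<in>UNIV. \<mu> i * Q$i$j) = \<mu> j" and s1: "(\<Sum>i\<in>UNIV. \<mu> i) = 1"
    and nn: "\<And>i. 0 \<le> \<mu> i" using st by (auto simp: is_stationary_def prob_dist_def)
  have "(\<Sum>i\<in>UNIV. \<mu> i * a') \<le> (\<Sum>i\<in>UNIV. \<mu> i * mat_act (mat_pow Q m) f i)"
    "(\<Sum>i\<in>UNIV. \<mu> i * mat_act (mat_pow Q m) f i) \<le> (\<Sum>i\<in>UNIV. \<mu> i * b')"
    using ab nn by (auto intro!: sum_mono mult_left_mono)
  then have "a' \<le> (\<Sum>j\<in>UNIV. \<mu> j * f j)" "(\<Sum>j\<in>UNIV. \<mu> j * f j) \<le> b'"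
    using s1 by (simp_all add: invariant_mat_act[OF inv] flip: sum_distrib_right)
  then show ?thesis using ab by (smt (verit))
qed

text \<open>The stationary distributions of \<open>Q\<close> are exactly the solutions of \<open>M \<pi> = 1\<close> for
  \<open>M = I - Q\<^sup>T + J\<close> (\<open>J\<close> the all-ones matrix): the row \<open>j\<close> reads \<open>\<pi> j - (\<pi> Q) j + \<Sum>\<pi> = 1\<close>.
  Invertibility of \<open>M\<close> makes \<open>\<pi>\<close> a quotient of determinants by Cramer's rule, hence a smooth
  function of the entries of \<open>Q\<close>.\<close>
definition stationarity_matrix :: "real^'x::finite^'x \<Rightarrow> real^'x^'x" where
  "stationarity_matrix Q = (\<chi> j i. (if i = j then 1 else 0) - Q$i$j + 1)"

lemma stationarity_matrix_mult:
  "(stationarity_matrix Q *v v) $ j = v $ j - (\<Sum>i\<in>UNIV. Q$i$j * v$i) + (\<Sum>i\<in>UNIV. v$i)"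
proof -
  have "(stationarity_matrix Q *v v) $ j = (\<Sum>i\<in>UNIV. ((if i = j then v$i else 0) - Q$i$j * v$i) + v$i)"
    unfolding stationarity_matrix_def matrix_vector_mult_def vec_lambda_beta
    by (rule sum.cong) (auto simp: algebra_simps)
  also have "\<dots> = (\<Sum>i\<in>UNIV. (if i = j then v$i else 0)) - (\<Sum>i\<in>UNIV. Q$i$j * v$i) + (\<Sum>i\<in>UNIV. v$i)"
    by (simp only: sum.distrib sum_subtractf)
  finally show ?thesis by simp
qed

lemma sum_stationarity_matrix_mult:
  fixes Q :: "real^'x::finite^'x"
  assumes "transition_matrix Q"
  shows "(\<Sum>j\<in>UNIV. (stationarity_matrix Q *v v) $ j) = real CARD('x) * (\<Sum>i\<in>UNIV. v$i)"
proof -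
  have "(\<Sum>j\<in>UNIV. \<Sum>i\<in>UNIV. Q$i$j * v$i) = (\<Sum>i\<in>UNIV. (\<Sum>j\<in>UNIV. Q$i$j) * v$i)"
    by (subst sum.swap) (simp add: sum_distrib_right)
  also have "\<dots> = (\<Sum>i\<in>UNIV. v$i)" using assms by (simp add: transition_matrix_def)
  finally show ?thesis unfolding stationarity_matrix_mult by (simp add: sum.distrib sum_subtractf)
qed

lemma stationarity_matrix_eq_const_imp:
  fixes Q :: "real^'x::finite^'x"
  assumes Q: "transition_matrix Q" and eq: "stationarity_matrix Q *v v = (\<chi> i. s)"
  shows "(\<Sum>i\<in>UNIV. v$i) = s" "\<And>j. (\<Sum>i\<in>UNIV. v$i * Q$i$j) = v$j - s + (\<Sum>i\<in>UNIV. v$i)"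
proof -
  show sum: "(\<Sum>i\<in>UNIV. v$i) = s" using sum_stationarity_matrix_mult[OF Q, of v] eq by simp
  show "(\<Sum>i\<in>UNIV. v$i * Q$i$j) = v$j - s + (\<Sum>i\<in>UNIV. v$i)" for j
    using arg_cong[OF eq, of "\<lambda>w. w $ j"] unfolding stationarity_matrix_mult by (simp add: mult.commute)
qed

lemma det_stationarity_matrix_nonzero:
  fixes Q :: "real^'x::finite^'x"
  assumes Q: "transition_matrix Q" and c: "geometric_contraction Q C \<rho>"
  shows "det (stationarity_matrix Q) \<noteq> 0"
proof -
  have "v = 0" if "stationarity_matrix Q *v v = 0" for v
  proof -
    have "stationarity_matrix Q *v v = (\<chi> i. 0)" using that by (simp add: zero_vec_def)
    note eqs = stationarity_matrix_eq_const_imp[OF Q this]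
    show "v = 0"
      using invariant_zero_mass_eq_0[OF c, of "\<lambda>i. v$i"] eqs by (simp add: vec_eq_iff)
  qed
  then have "inj ((*v) (stationarity_matrix Q))" by (simp add: vec.inj_iff_eq_0)
  then show ?thesis using det_nz_iff_inj[of "(*v) (stationarity_matrix Q)"]
    by (simp add: matrix_of_matrix_vector_mul matrix_vector_mul_linear)
qed

lemma stationary_unique:
  fixes Q :: "real^'x::finite^'x"
  assumes c: "geometric_contraction Q C \<rho>"
    and st: "is_stationary Q \<pi>" "is_stationary Q \<pi>'"
  shows "\<pi> = \<pi>'"
proof -
  have "\<pi> j - \<pi>' j = 0" for j
  proof (rule invariant_zero_mass_eq_0[OF c])
    show "(\<Sum>i\<in>UNIV. (\<pi> i - \<pi>' i) * Q $ i $ j) = \<pi> j - \<pi>' j" for j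
      using st unfolding is_stationary_def by (simp add: left_diff_distrib sum_subtractf)
    show "(\<Sum>i\<in>UNIV. \<pi> i - \<pi>' i) = 0"
      using st unfolding is_stationary_def prob_dist_def by (simp add: sum_subtractf)
  qed
  then show ?thesis by auto
qed

lemma stationary_exists:
  fixes Q :: "real^'x::finite^'x"
  assumes Q: "transition_matrix Q" and c: "geometric_contraction Q C \<rho>"
  obtains \<pi> where "is_stationary Q \<pi>"
proof -
  have "invertible (stationarity_matrix Q)"
    using det_stationarity_matrix_nonzero[OF Q c] by (simp add: invertible_det_nz)
  then obtain B where B: "stationarity_matrix Q ** B = mat 1" unfolding invertible_def by blast
  define v where "v = B *v (\<chi> i. 1)"
  have "stationarity_matrix Q *v v = (\<chi> i. 1)" unfolding v_def matrix_vector_mul_assoc B by simp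
  note eqs = stationarity_matrix_eq_const_imp[OF Q this]
  have "is_stationary Q (\<lambda>i. v$i)"
    unfolding is_stationary_def prob_dist_def
    using eqs invariant_unit_mass_nonneg[OF c, of "\<lambda>i. v$i"] by simp
  then show thesis by (rule that)
qed

lemma stat_dist_stationary:
  fixes Q :: "real^'x::finite^'x"
  assumes Q: "transition_matrix Q" and c: "geometric_contraction Q C \<rho>"
  shows "is_stationary Q (stat_dist Q)"
proof -
  obtain \<pi> where \<pi>: "is_stationary Q \<pi>" using stationary_exists[OF Q c] .
  have "stat_dist Q = \<pi>"
    unfolding stat_dist_def using \<pi> stationary_unique[OF c] by (intro the_equality) auto
  then show ?thesis using \<pi> by simp
qed

lemma stat_dist_cramer:
  fixes Q :: "real^'x::finite^'x"
  assumes Q: "transition_matrix Q" and c: "geometric_contraction Q C \<rho>"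
  shows "stat_dist Q k =
    det (\<chi> i j. if j = k then 1 else stationarity_matrix Q $ i $ j) / det (stationarity_matrix Q)"
proof -
  let ?M = "stationarity_matrix Q" and ?\<pi> = "\<chi> i. stat_dist Q i"
  have eq: "?M *v ?\<pi> = (\<chi> i. 1)"
    using stat_dist_stationary[OF Q c]
    unfolding vec_eq_iff stationarity_matrix_mult is_stationary_def prob_dist_def
    by (simp add: mult.commute)
  have "det (\<chi> i j. if j = k then (?M *v ?\<pi>) $ i else ?M $ i $ j) = stat_dist Q k * det ?M"
    using cramer_lemma[of k ?M ?\<pi>] by simp
  then have "det (\<chi> i j. if j = k then 1 else ?M $ i $ j) = stat_dist Q k * det ?M"
    unfolding eq by (simp only: vec_lambda_beta)
  then show ?thesis using det_stationarity_matrix_nonzero[OF Q c] by (simp add: field_simps)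
qed

section \<open>Expectations over sample paths\<close>

lemma paths_0: "paths 0 = (\<lambda>x. [x]) ` UNIV"
  by (auto simp: paths_def length_Suc_conv)

lemma paths_Suc: "paths (Suc N) = (\<lambda>(xs, y). xs @ [y]) ` (paths N \<times> UNIV)"
proof (intro set_eqI iffI)
  fix zs assume "zs \<in> paths (Suc N)"
  then have l: "length zs = Suc (Suc N)" by (simp add: paths_def)
  then have "zs = butlast zs @ [last zs]" by (metis append_butlast_last_id list.size(3) nat.simps(3))
  moreover have "butlast zs \<in> paths N" using l by (simp add: paths_def)
  ultimately show "zs \<in> (\<lambda>(xs, y). xs @ [y]) ` (paths N \<times> UNIV)"
    by (auto intro!: image_eqI[where x="(butlast zs, last zs)"])
qed (auto simp: paths_def)

lemma path_prob_snoc: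
  assumes "length xs = Suc N"
  shows "path_prob \<pi>0 Q (Suc N) (xs @ [y]) = path_prob \<pi>0 Q N xs * Q $ (xs ! N) $ y"
proof -
  have "(\<Prod>k\<in>{1..Suc N}. Q $ ((xs @ [y]) ! (k - 1)) $ ((xs @ [y]) ! k))
      = (\<Prod>k\<in>{1..N}. Q $ ((xs @ [y]) ! (k - 1)) $ ((xs @ [y]) ! k)) * Q $ (xs ! N) $ y"
    using assms by (simp add: prod.cl_ivl_Suc nth_append)
  also have "(\<Prod>k\<in>{1..N}. Q $ ((xs @ [y]) ! (k - 1)) $ ((xs @ [y]) ! k))
      = (\<Prod>k\<in>{1..N}. Q $ (xs ! (k - 1)) $ (xs ! k))"
    using assms by (intro prod.cong) (auto simp: nth_append)
  finally show ?thesis using assms by (simp add: path_prob_def nth_append mult.assoc)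
qed

lemma path_expect_0: "path_expect \<pi>0 Q 0 F = (\<Sum>x\<in>UNIV. \<pi>0 x *\<^sub>R F [x])"
  unfolding path_expect_def paths_0 by (subst sum.reindex) (auto simp: inj_on_def path_prob_def)

lemma path_expect_Suc:
  "path_expect \<pi>0 Q (Suc N) F =
     path_expect \<pi>0 Q N (\<lambda>xs. \<Sum>y\<in>UNIV. Q $ (xs ! N) $ y *\<^sub>R F (xs @ [y]))"
proof -
  have "inj_on (\<lambda>(xs, y). xs @ [y]) A" for A :: "('x list \<times> 'x) set" by (auto simp: inj_on_def)
  then have "path_expect \<pi>0 Q (Suc N) F =
      (\<Sum>(xs, y)\<in>paths N \<times> UNIV. path_prob \<pi>0 Q (Suc N) (xs @ [y]) *\<^sub>R F (xs @ [y]))"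
    unfolding path_expect_def paths_Suc by (subst sum.reindex) (simp_all add: case_prod_unfold)
  also have "\<dots> = (\<Sum>xs\<in>paths N. \<Sum>y\<in>UNIV. path_prob \<pi>0 Q (Suc N) (xs @ [y]) *\<^sub>R F (xs @ [y]))"
    by (subst sum.cartesian_product) simp
  also have "\<dots> = (\<Sum>xs\<in>paths N. path_prob \<pi>0 Q N xs *\<^sub>R (\<Sum>y\<in>UNIV. Q $ (xs ! N) $ y *\<^sub>R F (xs @ [y])))"
    by (intro sum.cong refl) (auto simp: paths_def path_prob_snoc scaleR_sum_right)
  finally show ?thesis unfolding path_expect_def .
qed

lemma path_expect_cong:
  "(\<And>xs. xs \<in> paths N \<Longrightarrow> F xs = G xs) \<Longrightarrow> path_expect \<pi>0 Q N F = path_expect \<pi>0 Q N G"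
  unfolding path_expect_def by (auto intro: sum.cong)

lemma path_expect_add:
  "path_expect \<pi>0 Q N (\<lambda>xs. F xs + G xs) = path_expect \<pi>0 Q N F + path_expect \<pi>0 Q N G"
  unfolding path_expect_def by (simp add: scaleR_add_right sum.distrib)

lemma path_expect_diff:
  "path_expect \<pi>0 Q N (\<lambda>xs. F xs - G xs) = path_expect \<pi>0 Q N F - path_expect \<pi>0 Q N G"
  unfolding path_expect_def by (simp add: scaleR_diff_right sum_subtractf)

lemma path_expect_scaleR: "path_expect \<pi>0 Q N (\<lambda>xs. a *\<^sub>R F xs) = a *\<^sub>R path_expect \<pi>0 Q N F"
  unfolding path_expect_def scaleR_sum_right scaleR_scaleR by (simp add: mult.commute)

lemma path_expect_mult: "path_expect \<pi>0 Q N (\<lambda>xs. a * (F xs :: real)) = a * path_expect \<pi>0 Q N F"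
  using path_expect_scaleR[of \<pi>0 Q N a F] by simp

lemma path_expect_sum:
  "path_expect \<pi>0 Q N (\<lambda>xs. \<Sum>i\<in>I. F i xs) = (\<Sum>i\<in>I. path_expect \<pi>0 Q N (F i))"
  unfolding path_expect_def by (simp add: scaleR_sum_right sum.swap[of _ I])

lemma path_expect_inner_left: "path_expect \<pi>0 Q N (\<lambda>xs. v \<bullet> F xs) = v \<bullet> path_expect \<pi>0 Q N F"
  unfolding path_expect_def by (simp add: inner_sum_right)

definition depends_on_prefix :: "nat \<Rightarrow> ('x list \<Rightarrow> 'b) \<Rightarrow> bool" where
  "depends_on_prefix L F \<longleftrightarrow> (\<forall>xs. Suc L \<le> length xs \<longrightarrow> F xs = F (take (Suc L) xs))"

lemma depends_on_prefix_snoc: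
  assumes "depends_on_prefix L F" "L \<le> N" "length xs = Suc N"
  shows "F (xs @ [y]) = F xs"
proof -
  note prefix = assms(1)[unfolded depends_on_prefix_def, rule_format]
  have "F (xs @ [y]) = F (take (Suc L) (xs @ [y]))" "F xs = F (take (Suc L) xs)"
    by (rule prefix, use assms(2,3) in simp)+
  moreover have "take (Suc L) (xs @ [y]) = take (Suc L) xs" using assms(2,3) by simp
  ultimately show ?thesis by simp
qed

lemma path_expect_last_state:
  assumes F: "depends_on_prefix L F" and "L \<le> N"
  shows "path_expect \<pi>0 Q N (\<lambda>xs. g (xs ! N) *\<^sub>R F xs)
       = path_expect \<pi>0 Q L (\<lambda>xs. mat_act (mat_pow Q (N - L)) g (xs ! L) *\<^sub>R F xs)"
  using assms(2)
proof (induction N arbitrary: g rule: dec_induct)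
  case base
  show ?case by (simp add: mat_act_mat_1)
next
  case (step n)
  have "path_expect \<pi>0 Q (Suc n) (\<lambda>xs. g (xs ! Suc n) *\<^sub>R F xs)
      = path_expect \<pi>0 Q n (\<lambda>xs. mat_act Q g (xs ! n) *\<^sub>R F xs)"
    unfolding path_expect_Suc
  proof (rule path_expect_cong)
    fix xs :: "'a list" assume "xs \<in> paths n"
    then have "length xs = Suc n" by (simp add: paths_def)
    then show "(\<Sum>y\<in>UNIV. Q $ (xs ! n) $ y *\<^sub>R (g ((xs @ [y]) ! Suc n) *\<^sub>R F (xs @ [y])))
        = mat_act Q g (xs ! n) *\<^sub>R F xs"
      using depends_on_prefix_snoc[OF F step(1)]
      by (simp add: nth_append mat_act_def scaleR_sum_left)
  qed
  also have "\<dots> = path_expect \<pi>0 Q L (\<lambda>xs. mat_act (mat_pow Q (n - L)) (mat_act Q g) (xs ! L) *\<^sub>R F xs)"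
    by (rule step.IH)
  also have "mat_act (mat_pow Q (n - L)) (mat_act Q g) = mat_act (mat_pow Q (Suc n - L)) g"
    using step(1) by (simp only: Suc_diff_le mat_pow_Suc_right mat_act_mult)
  finally show ?case .
qed

lemma path_expect_state:
  fixes \<psi> :: "'x::finite \<Rightarrow> 'b::real_vector"
  shows "path_expect \<pi>0 Q L (\<lambda>xs. \<psi> (xs ! L)) =
     (\<Sum>i\<in>UNIV. (\<Sum>x\<in>UNIV. \<pi>0 x * mat_pow Q L $ x $ i) *\<^sub>R \<psi> i)"
proof -
  define e where "e i j = (if j = i then 1 else 0 :: real)" for i j :: 'x
  have "(\<Sum>i\<in>UNIV. e i x *\<^sub>R \<psi> i) = (\<Sum>i\<in>UNIV. if i = x then \<psi> i else 0)" for x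
    by (rule sum.cong) (auto simp: e_def)
  then have "path_expect \<pi>0 Q L (\<lambda>xs. \<psi> (xs ! L)) =
      path_expect \<pi>0 Q L (\<lambda>xs. \<Sum>i\<in>UNIV. e i (xs ! L) *\<^sub>R \<psi> i)"
    by simp
  also have "\<dots> = (\<Sum>i\<in>UNIV. path_expect \<pi>0 Q 0 (\<lambda>xs. mat_act (mat_pow Q L) (e i) (xs ! 0) *\<^sub>R \<psi> i))"
    unfolding path_expect_sum
    by (intro sum.cong refl, subst path_expect_last_state[of 0]) (auto simp: depends_on_prefix_def)
  also have "\<dots> = (\<Sum>i\<in>UNIV. (\<Sum>x\<in>UNIV. \<pi>0 x * mat_pow Q L $ x $ i) *\<^sub>R \<psi> i)"
    by (simp add: path_expect_0 mat_act_def e_def if_distrib scaleR_sum_left cong: if_cong)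
  finally show ?thesis .
qed

context
  fixes \<pi>0 :: "'x::finite \<Rightarrow> real" and Q :: "real^'x^'x"
  assumes Q: "transition_matrix Q" and \<pi>0: "prob_dist \<pi>0"
begin

lemma path_prob_nonneg: "0 \<le> path_prob \<pi>0 Q N xs"
  using Q \<pi>0 unfolding path_prob_def transition_matrix_def prob_dist_def
  by (auto intro!: mult_nonneg_nonneg prod_nonneg)

lemma path_expect_prefix:
  assumes F: "depends_on_prefix L F" and "L \<le> N"
  shows "path_expect \<pi>0 Q N F = path_expect \<pi>0 Q L F"
  using assms(2)
proof (induction N rule: dec_induct)
  case (step n)
  have "path_expect \<pi>0 Q (Suc n) F = path_expect \<pi>0 Q n F"
    unfolding path_expect_Suc
  proof (rule path_expect_cong)
    fix xs :: "'x list" assume "xs \<in> paths n"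
    then have "length xs = Suc n" by (simp add: paths_def)
    then have "(\<Sum>y\<in>UNIV. Q $ (xs ! n) $ y *\<^sub>R F (xs @ [y])) = (\<Sum>y\<in>UNIV. Q $ (xs ! n) $ y) *\<^sub>R F xs"
      using depends_on_prefix_snoc[OF F step(1)] by (simp add: scaleR_sum_left)
    then show "(\<Sum>y\<in>UNIV. Q $ (xs ! n) $ y *\<^sub>R F (xs @ [y])) = F xs"
      using Q by (simp add: transition_matrix_def)
  qed
  then show ?case using step by simp
qed simp

lemma path_expect_const: "path_expect \<pi>0 Q N (\<lambda>xs. v) = v"
proof -
  have "path_expect \<pi>0 Q N (\<lambda>xs. v) = path_expect \<pi>0 Q 0 (\<lambda>xs. v)"
    by (rule path_expect_prefix) (simp_all add: depends_on_prefix_def)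
  also have "\<dots> = v" using \<pi>0 by (simp add: path_expect_0 prob_dist_def flip: scaleR_sum_left)
  finally show ?thesis .
qed

lemma path_expect_mono:
  "(\<And>xs. xs \<in> paths N \<Longrightarrow> F xs \<le> (G xs :: real)) \<Longrightarrow> path_expect \<pi>0 Q N F \<le> path_expect \<pi>0 Q N G"
  unfolding path_expect_def by (auto intro!: sum_mono mult_left_mono path_prob_nonneg)

lemma path_expect_le_const:
  "(\<And>xs. xs \<in> paths N \<Longrightarrow> F xs \<le> (b :: real)) \<Longrightarrow> path_expect \<pi>0 Q N F \<le> b"
  using path_expect_mono[of N F "\<lambda>_. b"] path_expect_const[of N b] by simp

text \<open>Martingale differences are orthogonal, so their second moments add up.\<close>
lemma path_expect_norm_sq_martingale_le:
  fixes Y :: "nat \<Rightarrow> 'x list \<Rightarrow> 'v::real_inner"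
  assumes Y: "\<And>k. depends_on_prefix k (Y k)"
    and mart: "\<And>n xs. length xs = Suc n \<Longrightarrow> (\<Sum>y\<in>UNIV. Q$(xs!n)$y *\<^sub>R Y (Suc n) (xs@[y])) = 0"
    and bnd: "\<And>k xs. 1 \<le> k \<Longrightarrow> norm (Y k xs) \<le> b"
  shows "path_expect \<pi>0 Q N (\<lambda>xs. (norm (\<Sum>k\<in>{1..N}. Y k xs))\<^sup>2) \<le> real N * b\<^sup>2"
proof (induction N)
  case 0
  then show ?case by (simp add: path_expect_const)
next
  case (Suc N)
  have step: "(\<Sum>y\<in>UNIV. Q$(xs!N)$y *\<^sub>R (norm (\<Sum>k\<in>{1..Suc N}. Y k (xs@[y])))\<^sup>2)
      \<le> (norm (\<Sum>k\<in>{1..N}. Y k xs))\<^sup>2 + b\<^sup>2" if "xs \<in> paths N" for xs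
  proof -
    have len: "length xs = Suc N" using that by (simp add: paths_def)
    define S where "S = (\<Sum>k\<in>{1..N}. Y k xs)"
    define Z where "Z y = Y (Suc N) (xs @ [y])" for y
    define q where "q y = Q$(xs!N)$y" for y
    have q: "(\<Sum>y\<in>UNIV. q y) = 1" "\<And>y. 0 \<le> q y" using Q by (auto simp: q_def transition_matrix_def)
    have "(\<Sum>k\<in>{1..N}. Y k (xs@[y])) = S" for y
      unfolding S_def by (intro sum.cong refl) (use depends_on_prefix_snoc[OF Y _ len] in auto)
    then have "(\<Sum>y\<in>UNIV. q y *\<^sub>R (norm (\<Sum>k\<in>{1..Suc N}. Y k (xs@[y])))\<^sup>2)
        = (\<Sum>y\<in>UNIV. q y * (norm S)\<^sup>2 + 2 * (S \<bullet> (q y *\<^sub>R Z y)) + q y * (norm (Z y))\<^sup>2)"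
      by (simp add: Z_def power2_norm_eq_inner inner_add_left inner_add_right inner_commute algebra_simps)
    also have "\<dots> = (norm S)\<^sup>2 + 2 * (S \<bullet> (\<Sum>y\<in>UNIV. q y *\<^sub>R Z y)) + (\<Sum>y\<in>UNIV. q y * (norm (Z y))\<^sup>2)"
      by (simp add: q sum.distrib inner_sum_right flip: sum_distrib_left sum_distrib_right)
    also have "(\<Sum>y\<in>UNIV. q y *\<^sub>R Z y) = 0" unfolding q_def Z_def by (rule mart[OF len])
    also have "(\<Sum>y\<in>UNIV. q y * (norm (Z y))\<^sup>2) \<le> (\<Sum>y\<in>UNIV. q y * b\<^sup>2)"
      using bnd[of "Suc N"] q(2) by (intro sum_mono mult_left_mono power_mono) (auto simp: Z_def)
    also have "(\<Sum>y\<in>UNIV. q y * b\<^sup>2) = b\<^sup>2" using q(1) by (simp flip: sum_distrib_right)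
    finally show ?thesis by (simp add: S_def q_def)
  qed
  have "path_expect \<pi>0 Q (Suc N) (\<lambda>xs. (norm (\<Sum>k\<in>{1..Suc N}. Y k xs))\<^sup>2)
      \<le> path_expect \<pi>0 Q N (\<lambda>xs. (norm (\<Sum>k\<in>{1..N}. Y k xs))\<^sup>2 + b\<^sup>2)"
    unfolding path_expect_Suc by (rule path_expect_mono) (rule step)
  also have "\<dots> \<le> real N * b\<^sup>2 + b\<^sup>2" using Suc by (simp add: path_expect_add path_expect_const)
  finally show ?case by (simp add: algebra_simps)
qed


lemma trace_cov_le_second_moment:
  "trace_cov \<pi>0 Q N Z \<le> path_expect \<pi>0 Q N (\<lambda>xs. (norm (Z xs))\<^sup>2)"
proof -
  define m where "m = path_expect \<pi>0 Q N Z"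
  have "trace_cov \<pi>0 Q N Z = path_expect \<pi>0 Q N (\<lambda>xs. (norm (Z xs))\<^sup>2 - 2 * (m \<bullet> Z xs) + (norm m)\<^sup>2)"
    unfolding trace_cov_def m_def[symmetric]
    by (intro path_expect_cong) (simp add: power2_norm_eq_inner inner_diff_left inner_diff_right inner_commute)
  also have "\<dots> = path_expect \<pi>0 Q N (\<lambda>xs. (norm (Z xs))\<^sup>2) - (norm m)\<^sup>2"
    by (simp add: path_expect_add path_expect_diff path_expect_mult path_expect_inner_left
        path_expect_const m_def power2_norm_eq_inner)
  finally show ?thesis by simp
qed
end

section \<open>Elementary sums\<close>

lemma sum_scaleR_partial_sums:
  fixes v :: "nat \<Rightarrow> 'v::real_vector"
  shows "(\<Sum>k\<in>{1..N}. a k *\<^sub>R (\<Sum>m\<in>{1..k}. v m)) = (\<Sum>m\<in>{1..N}. (\<Sum>k\<in>{m..N}. a k) *\<^sub>R v m)"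
proof (induction N)
  case (Suc N)
  have "(\<Sum>m\<in>{1..Suc N}. (\<Sum>k\<in>{m..Suc N}. a k) *\<^sub>R v m)
      = (\<Sum>m\<in>{1..Suc N}. (\<Sum>k\<in>{m..N}. a k) *\<^sub>R v m) + a (Suc N) *\<^sub>R (\<Sum>m\<in>{1..Suc N}. v m)"
    by (simp add: scaleR_add_left scaleR_add_right sum.distrib scaleR_sum_right)
  then show ?case using Suc by simp
qed simp

lemma sum_scaleR_strict_partial_sums:
  fixes v :: "nat \<Rightarrow> 'v::real_vector"
  shows "(\<Sum>k\<in>{1..N}. a k *\<^sub>R (\<Sum>m\<in>{1..k - 1}. v m)) = (\<Sum>m\<in>{1..N}. (\<Sum>k\<in>{Suc m..N}. a k) *\<^sub>R v m)"
proof (induction N)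
  case (Suc N)
  have "(\<Sum>m\<in>{1..Suc N}. (\<Sum>k\<in>{Suc m..Suc N}. a k) *\<^sub>R v m)
      = (\<Sum>m\<in>{1..N}. (\<Sum>k\<in>{Suc m..N}. a k) *\<^sub>R v m) + a (Suc N) *\<^sub>R (\<Sum>m\<in>{1..N}. v m)"
    by (simp add: scaleR_add_left sum.distrib scaleR_sum_right)
  then show ?case using Suc by simp
qed simp

lemma sum_cost_telescope:
  fixes x :: "nat \<Rightarrow> 'x" and c :: "'x \<Rightarrow> real" and g G :: "nat \<Rightarrow> 'x \<Rightarrow> real"
  assumes g0: "\<And>z. g 0 z = c z - \<gamma>" and gSuc: "\<And>n z. g (Suc n) z = c z - \<gamma> + G n z"
    and "m \<le> N"
  shows "(\<Sum>k\<in>{m..N}. c (x k)) = real (Suc N - m) * \<gamma> + g (N - m) (x m)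
      + (\<Sum>k\<in>{Suc m..N}. g (N - k) (x k) - G (N - k) (x (k - 1)))"
  using assms(3)
proof (induction "N - m" arbitrary: m)
  case 0
  then show ?case by (simp add: g0)
next
  case (Suc d)
  then have IH: "(\<Sum>k\<in>{Suc m..N}. c (x k)) = real (Suc N - Suc m) * \<gamma> + g (N - Suc m) (x (Suc m))
      + (\<Sum>k\<in>{Suc (Suc m)..N}. g (N - k) (x k) - G (N - k) (x (k - 1)))"
    by simp
  have "g (N - m) (x m) = c (x m) - \<gamma> + G (N - Suc m) (x m)"
    using gSuc[of "N - Suc m" "x m"] Suc(2) by (simp add: Suc_diff_Suc)
  moreover have "real (Suc N - m) = real (Suc N - Suc m) + 1" using Suc(2) by simp
  ultimately show ?case using Suc(2) IH by (simp add: sum.atLeast_Suc_atMost algebra_simps)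
qed

lemma power2_norm_add3_le:
  fixes a b d :: "'v::real_normed_vector"
  shows "(norm (a + b + d))\<^sup>2 \<le> 3 * ((norm a)\<^sup>2 + (norm b)\<^sup>2 + (norm d)\<^sup>2)"
proof -
  have "norm (a + b + d) \<le> norm a + norm b + norm d"
    by (metis add_mono norm_triangle_ineq order_trans order_refl)
  then have "(norm (a + b + d))\<^sup>2 \<le> (norm a + norm b + norm d)\<^sup>2" by (intro power_mono) auto
  also have "\<dots> \<le> 3 * ((norm a)\<^sup>2 + (norm b)\<^sup>2 + (norm d)\<^sup>2)"
    using sum_squares_ge_zero[of "norm a - norm b" "norm b - norm d"]
      zero_le_power2[of "norm a - norm d"] by (simp add: power2_eq_square algebra_simps)
  finally show ?thesis .
qed

lemma sum_atLeast1_power_le: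
  fixes \<rho> :: real
  assumes "0 \<le> \<rho>" "\<rho> < 1"
  shows "(\<Sum>k\<in>{1..N}. \<rho> ^ k) \<le> 1 / (1 - \<rho>)"
proof -
  have "(\<Sum>k\<in>{1..N}. \<rho> ^ k) \<le> (\<Sum>k<Suc N. \<rho> ^ k)"
    by (rule sum_mono2) (use assms in auto)
  also have "\<dots> = (1 - \<rho> ^ Suc N) / (1 - \<rho>)" using assms sum_gp_strict[of \<rho> "Suc N"] by simp
  also have "\<dots> \<le> 1 / (1 - \<rho>)" using assms by (intro divide_right_mono) auto
  finally show ?thesis .
qed

lemma sum_atLeast1_mult_power_eq:
  fixes \<rho> :: real
  shows "(1 - \<rho>)\<^sup>2 * (\<Sum>k\<in>{1..N}. real k * \<rho> ^ (k - 1)) = 1 - real (Suc N) * \<rho> ^ N + real N * \<rho> ^ Suc N"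
  by (induction N) (simp_all add: power2_eq_square algebra_simps)

lemma sum_atLeast1_mult_power_le:
  fixes \<rho> :: real
  assumes "0 \<le> \<rho>" "\<rho> < 1"
  shows "(\<Sum>k\<in>{1..N}. real k * \<rho> ^ (k - 1)) \<le> 1 / (1 - \<rho>)\<^sup>2"
proof -
  have "\<rho> ^ Suc N \<le> \<rho> ^ N" using assms by (simp add: mult_left_le_one_le)
  then have "real N * \<rho> ^ Suc N \<le> real (Suc N) * \<rho> ^ N" using assms by (intro mult_mono) auto
  then have "(1 - \<rho>)\<^sup>2 * (\<Sum>k\<in>{1..N}. real k * \<rho> ^ (k - 1)) \<le> 1"
    unfolding sum_atLeast1_mult_power_eq by simp
  moreover have "0 < (1 - \<rho>)\<^sup>2" using assms by simp
  ultimately show ?thesis by (simp add: field_simps)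
qed

section \<open>Differentiability of the stationary distribution\<close>

lemma grad_eqI:
  fixes f :: "real^'p \<Rightarrow> real"
  assumes "(f has_derivative (\<lambda>h. v \<bullet> h)) (at t)"
  shows "grad f t = v"
proof -
  have "frechet_derivative f (at t) = (\<lambda>h. v \<bullet> h)" using frechet_derivative_at[OF assms] by simp
  then show ?thesis unfolding grad_def by (simp add: vec_eq_iff inner_axis)
qed

lemma has_derivative_grad:
  fixes f :: "real^'p \<Rightarrow> real"
  assumes "f differentiable (at t)"
  shows "(f has_derivative (\<lambda>h. grad f t \<bullet> h)) (at t)"
proof -
  let ?L = "frechet_derivative f (at t)"
  have lin: "linear ?L" by (rule linear_frechet_derivative[OF assms])
  have "?L h = grad f t \<bullet> h" for h
  proof -
    have "?L h = ?L (\<Sum>k\<in>UNIV. h$k *\<^sub>R axis k 1)"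
      using basis_expansion[of h] by (simp add: scalar_mult_eq_scaleR)
    also have "\<dots> = (\<Sum>k\<in>UNIV. h$k * ?L (axis k 1))"
      by (simp add: linear_sum[OF lin] linear_cmul[OF lin])
    also have "\<dots> = grad f t \<bullet> h" by (simp add: grad_def inner_vec_def mult.commute)
    finally show ?thesis .
  qed
  then have "?L = (\<lambda>h. grad f t \<bullet> h)" by auto
  then show ?thesis using frechet_derivative_works[of f "at t"] assms by simp
qed

lemma has_derivative_inner_zero_on_open:
  fixes f :: "real^'p \<Rightarrow> real"
  assumes "(f has_derivative (\<lambda>h. v \<bullet> h)) (at t)" "open U" "t \<in> U" "\<And>s. s \<in> U \<Longrightarrow> f s = 0"
  shows "v = 0"
proof -
  have "((\<lambda>s. 0) has_derivative (\<lambda>h. v \<bullet> h)) (at t)"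
    using has_derivative_transform_within_open[OF assms(1-3)] assms(4) by auto
  then have "grad (\<lambda>s. 0) t = v" by (rule grad_eqI)
  moreover have "grad (\<lambda>s. 0) t = 0" by (rule grad_eqI) simp
  ultimately show ?thesis by simp
qed

lemma differentiable_det:
  fixes A :: "'a::real_normed_vector \<Rightarrow> real^'x::finite^'x"
  assumes "\<And>i j. (\<lambda>t. A t $ i $ j) differentiable (at t0)"
  shows "(\<lambda>t. det (A t)) differentiable (at t0)"
proof -
  have "(\<lambda>t. \<Prod>i\<in>UNIV. A t $ i $ p i) differentiable (at t0)" for p :: "'x \<Rightarrow> 'x"
  proof -
    define D where "D i = frechet_derivative (\<lambda>t. A t $ i $ p i) (at t0)" for i
    have "((\<lambda>t. A t $ i $ p i) has_derivative D i) (at t0)" for i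
      unfolding D_def using assms frechet_derivative_works by blast
    then show ?thesis using has_derivative_prod[of UNIV "\<lambda>i t. A t $ i $ p i" D t0 UNIV]
      unfolding differentiable_def by blast
  qed
  then show ?thesis unfolding det_def
    by (intro differentiable_sum ballI differentiable_mult differentiable_const)
      (simp_all add: finite_permutations)
qed

locale smooth_regular_family =
  fixes P :: "real^'p \<Rightarrow> real^'x::finite^'x"
    and U :: "(real^'p) set"
    and c :: "'x \<Rightarrow> real"
    and \<pi>0 :: "'x \<Rightarrow> real"
    and \<theta> :: "real^'p"
  assumes open_U: "open U"
    and transition: "\<And>t. t \<in> U \<Longrightarrow> transition_matrix (P t)"
    and regular: "\<And>t. t \<in> U \<Longrightarrow> regular (P t)"
    and C1: "\<And>i j. C1_on (\<lambda>t. P t $ i $ j) U"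
    and grad_zero: "\<And>t i j. t \<in> U \<Longrightarrow> P t $ i $ j = 0 \<Longrightarrow> grad (\<lambda>s. P s $ i $ j) t = 0"
    and \<pi>0: "prob_dist \<pi>0"
    and \<theta>: "\<theta> \<in> U"
begin

abbreviation Q :: "real^'x^'x" where "Q \<equiv> P \<theta>"

abbreviation \<pi> :: "'x \<Rightarrow> real" where "\<pi> \<equiv> stat_dist Q"

definition dP :: "'x \<Rightarrow> 'x \<Rightarrow> real^'p" where
  "dP i j = grad (\<lambda>t. P t $ i $ j) \<theta>"

text \<open>Where \<open>Q i j = 0\<close>, division by zero makes \<open>dlogP i j = 0\<close>; by \<open>grad_zero\<close> the identity
  \<open>Q i j \<cdot> dlogP i j = dP i j\<close> still holds there.\<close>
definition dlogP :: "'x \<Rightarrow> 'x \<Rightarrow> real^'p" where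
  "dlogP i j = (1 / Q $ i $ j) *\<^sub>R dP i j"

definition d\<pi> :: "'x \<Rightarrow> real^'p" where
  "d\<pi> k = grad (\<lambda>t. stat_dist (P t) k) \<theta>"

lemma transition_Q: "transition_matrix Q"
  using transition \<theta> by blast

lemma has_derivative_P: "((\<lambda>s. P s $ i $ j) has_derivative (\<lambda>h. dP i j \<bullet> h)) (at \<theta>)"
proof -
  obtain g where g: "\<forall>t\<in>U. ((\<lambda>s. P s $ i $ j) has_derivative (\<lambda>h. g t \<bullet> h)) (at t)"
    using C1[of i j] unfolding C1_on_def by blast
  then have "dP i j = g \<theta>" unfolding dP_def using \<theta> by (intro grad_eqI) blast
  then show ?thesis using g \<theta> by simp
qed

lemma Q_scaleR_dlogP: "Q $ i $ j *\<^sub>R dlogP i j = dP i j"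
  using grad_zero[OF \<theta>, of i j] by (cases "Q $ i $ j = 0") (auto simp: dlogP_def dP_def)

lemma score_eq: "score P \<theta> xs k = (\<Sum>m\<in>{1..k}. dlogP (xs ! (m - 1)) (xs ! m))"
  by (simp add: score_def dlogP_def dP_def)

lemma score_take: "k < n \<Longrightarrow> score P \<theta> (take n xs) k = score P \<theta> xs k"
  unfolding score_eq by (intro sum.cong refl) auto

lemma score_snoc: "k < length xs \<Longrightarrow> score P \<theta> (xs @ [y]) k = score P \<theta> xs k"
  unfolding score_eq by (intro sum.cong refl) (auto simp: nth_append)

lemma sum_dP: "(\<Sum>j\<in>UNIV. dP i j) = 0"
proof (rule has_derivative_inner_zero_on_open[OF _ open_U \<theta>])
  show "((\<lambda>t. (\<Sum>j\<in>UNIV. P t $ i $ j) - 1) has_derivative (\<lambda>h. (\<Sum>j\<in>UNIV. dP i j) \<bullet> h)) (at \<theta>)"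
    using has_derivative_diff[OF has_derivative_sum[of UNIV "\<lambda>j t. P t $ i $ j", OF has_derivative_P]
        has_derivative_const[of 1]]
    by (simp add: inner_sum_left)
  show "(\<Sum>j\<in>UNIV. P s $ i $ j) - 1 = 0" if "s \<in> U" for s
    using transition[OF that] by (simp add: transition_matrix_def)
qed

lemma geometric_contraction_at:
  assumes "t \<in> U"
  obtains C \<rho> where "geometric_contraction (P t) C \<rho>"
  using regular_geometric_contraction[OF transition[OF assms] regular[OF assms]] that by blast

lemma stationary_at:
  assumes "t \<in> U"
  shows "is_stationary (P t) (stat_dist (P t))"
proof -
  obtain C \<rho> where "geometric_contraction (P t) C \<rho>" using geometric_contraction_at[OF assms] .
  then show ?thesis by (rule stat_dist_stationary[OF transition[OF assms]])
qed

lemma has_derivative_stat_dist: "((\<lambda>t. stat_dist (P t) k) has_derivative (\<lambda>h. d\<pi> k \<bullet> h)) (at \<theta>)"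
proof -
  let ?M = "\<lambda>t. stationarity_matrix (P t)"
  let ?Mk = "\<lambda>t. \<chi> i j. if j = k then 1 else ?M t $ i $ j"
  have P: "(\<lambda>t. P t $ i $ j) differentiable (at \<theta>)" for i j
    using has_derivative_P unfolding differentiable_def by blast
  have M: "(\<lambda>t. ?M t $ i $ j) differentiable (at \<theta>)" for i j
    unfolding stationarity_matrix_def vec_lambda_beta by (intro differentiable_add differentiable_diff differentiable_const P)
  have Mk: "(\<lambda>t. ?Mk t $ i $ j) differentiable (at \<theta>)" for i j
    by (cases "j = k") (simp_all add: M)
  obtain C \<rho> where "geometric_contraction Q C \<rho>" using geometric_contraction_at[OF \<theta>] .
  then have "det (?M \<theta>) \<noteq> 0" by (rule det_stationarity_matrix_nonzero[OF transition_Q])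
  then have "(\<lambda>t. det (?Mk t) / det (?M t)) differentiable (at \<theta>)"
    by (intro differentiable_divide differentiable_det Mk M)
  then obtain D where D: "((\<lambda>t. det (?Mk t) / det (?M t)) has_derivative D) (at \<theta>)"
    unfolding differentiable_def by blast
  have "stat_dist (P t) k = det (?Mk t) / det (?M t)" if t: "t \<in> U" for t
  proof -
    obtain C \<rho> where "geometric_contraction (P t) C \<rho>" using geometric_contraction_at[OF t] .
    then show ?thesis by (rule stat_dist_cramer[OF transition[OF t]])
  qed
  then have "((\<lambda>t. stat_dist (P t) k) has_derivative D) (at \<theta>)"
    by (intro has_derivative_transform_within_open[OF D open_U \<theta>]) simp
  then have "(\<lambda>t. stat_dist (P t) k) differentiable (at \<theta>)"
    unfolding differentiable_def by blast
  then show ?thesis unfolding d\<pi>_def by (rule has_derivative_grad)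
qed

lemma sum_d\<pi>: "(\<Sum>k\<in>UNIV. d\<pi> k) = 0"
proof (rule has_derivative_inner_zero_on_open[OF _ open_U \<theta>])
  show "((\<lambda>t. (\<Sum>k\<in>UNIV. stat_dist (P t) k) - 1) has_derivative (\<lambda>h. (\<Sum>k\<in>UNIV. d\<pi> k) \<bullet> h)) (at \<theta>)"
    using has_derivative_diff[OF has_derivative_sum[of UNIV "\<lambda>k t. stat_dist (P t) k",
        OF has_derivative_stat_dist] has_derivative_const[of 1]]
    by (simp add: inner_sum_left)
  show "(\<Sum>k\<in>UNIV. stat_dist (P s) k) - 1 = 0" if "s \<in> U" for s
    using stationary_at[OF that] by (simp add: is_stationary_def prob_dist_def)
qed

text \<open>Differentiating the stationarity equation \<open>\<pi> = \<pi> P\<close>.\<close>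
lemma d\<pi>_eq: "d\<pi> j = (\<Sum>i\<in>UNIV. \<pi> i *\<^sub>R dP i j + Q $ i $ j *\<^sub>R d\<pi> i)"
proof -
  define w where "w = d\<pi> j - (\<Sum>i\<in>UNIV. \<pi> i *\<^sub>R dP i j + Q $ i $ j *\<^sub>R d\<pi> i)"
  have "((\<lambda>t. stat_dist (P t) j - (\<Sum>i\<in>UNIV. stat_dist (P t) i * P t $ i $ j)) has_derivative
      (\<lambda>h. d\<pi> j \<bullet> h - (\<Sum>i\<in>UNIV. \<pi> i * (dP i j \<bullet> h) + (d\<pi> i \<bullet> h) * Q $ i $ j))) (at \<theta>)"
    by (intro has_derivative_diff has_derivative_sum has_derivative_mult has_derivative_stat_dist
        has_derivative_P)
  moreover have "(\<lambda>h. d\<pi> j \<bullet> h - (\<Sum>i\<in>UNIV. \<pi> i * (dP i j \<bullet> h) + (d\<pi> i \<bullet> h) * Q $ i $ j)) = (\<lambda>h. w \<bullet> h)"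
    by (simp add: w_def inner_diff_left inner_sum_left inner_add_left mult.commute)
  ultimately have "((\<lambda>t. stat_dist (P t) j - (\<Sum>i\<in>UNIV. stat_dist (P t) i * P t $ i $ j)) has_derivative
      (\<lambda>h. w \<bullet> h)) (at \<theta>)" by simp
  then have "w = 0"
    by (rule has_derivative_inner_zero_on_open[OF _ open_U \<theta>])
      (use stationary_at in \<open>simp add: is_stationary_def\<close>)
  then show ?thesis by (simp add: w_def)
qed

lemma grad_cost: "grad (\<lambda>t. \<Sum>x\<in>UNIV. c x * stat_dist (P t) x) \<theta> = (\<Sum>x\<in>UNIV. c x *\<^sub>R d\<pi> x)"
proof (rule grad_eqI)
  have "((\<lambda>t. \<Sum>x\<in>UNIV. c x * stat_dist (P t) x) has_derivative (\<lambda>h. \<Sum>x\<in>UNIV. c x * (d\<pi> x \<bullet> h))) (at \<theta>)"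
    by (intro has_derivative_sum has_derivative_mult_right has_derivative_stat_dist)
  then show "((\<lambda>t. \<Sum>x\<in>UNIV. c x * stat_dist (P t) x) has_derivative (\<lambda>h. (\<Sum>x\<in>UNIV. c x *\<^sub>R d\<pi> x) \<bullet> h)) (at \<theta>)"
    by (simp add: inner_sum_left)
qed

end

section \<open>Bias of the score function estimator\<close>

locale contracting_smooth_family = smooth_regular_family P U c \<pi>0 \<theta>
  for P :: "real^'p \<Rightarrow> real^'x::finite^'x" and U c \<pi>0 \<theta> +
  fixes C \<rho> :: real
  assumes contraction: "geometric_contraction (P \<theta>) C \<rho>"
begin

lemma C_\<rho>: "0 < C" "0 < \<rho>" "\<rho> < 1"
  using contraction by (auto simp: geometric_contraction_def)

lemma stationary_\<pi>: "is_stationary Q \<pi>"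
  using stationary_at[OF \<theta>] .

definition avg_cost :: real where
  "avg_cost = (\<Sum>j\<in>UNIV. \<pi> j * c j)"

definition c_norm :: real where
  "c_norm = (\<Sum>j\<in>UNIV. \<bar>c j\<bar>)"

definition centered_cost :: "nat \<Rightarrow> 'x \<Rightarrow> real" where
  "centered_cost b j = mat_act (mat_pow Q b) c j - avg_cost"

definition state_dist :: "nat \<Rightarrow> 'x \<Rightarrow> real" where
  "state_dist a i = (\<Sum>x\<in>UNIV. \<pi>0 x * mat_pow Q a $ x $ i)"

definition dP_form :: "('x \<Rightarrow> real) \<Rightarrow> ('x \<Rightarrow> real) \<Rightarrow> real^'p" where
  "dP_form \<mu> f = (\<Sum>i\<in>UNIV. \<Sum>j\<in>UNIV. (\<mu> i * f j) *\<^sub>R dP i j)"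

definition d\<pi>_form :: "('x \<Rightarrow> real) \<Rightarrow> real^'p" where
  "d\<pi>_form f = (\<Sum>j\<in>UNIV. f j *\<^sub>R d\<pi> j)"

lemma c_norm_nonneg: "0 \<le> c_norm"
  by (simp add: c_norm_def sum_nonneg)

lemma abs_c_le: "\<bar>c j\<bar> \<le> c_norm"
  unfolding c_norm_def by (rule member_le_sum) auto

lemma abs_centered_cost_le: "\<bar>centered_cost b j\<bar> \<le> C * \<rho> ^ b * (2 * c_norm)"
proof -
  have "- c_norm \<le> c j \<and> c j \<le> c_norm" for j using abs_c_le[of j] by linarith
  then have "\<forall>j. - c_norm \<le> c j \<and> c j \<le> c_norm" by blast
  from stationary_mat_act_dist[OF contraction stationary_\<pi> this, of b j]
  show ?thesis by (simp add: centered_cost_def avg_cost_def)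
qed

lemma mat_act_centered_cost: "mat_act Q (centered_cost b) j = centered_cost (Suc b) j"
  unfolding centered_cost_def mat_act_diff_const[OF transition_Q] by (simp add: mat_act_mult)

lemma abs_state_dist_diff_le: "\<bar>state_dist a i - \<pi> i\<bar> \<le> C * \<rho> ^ a"
proof -
  have "\<forall>j. 0 \<le> (if j = i then 1 else 0 :: real) \<and> (if j = i then 1 else 0 :: real) \<le> 1" by simp
  from stationary_mat_act_dist[OF contraction stationary_\<pi> this]
  have d: "\<bar>mat_pow Q a $ x $ i - \<pi> i\<bar> \<le> C * \<rho> ^ a" for x
    by (simp add: mat_act_indicator if_distrib cong: if_cong)
  have s1: "(\<Sum>x\<in>UNIV. \<pi>0 x) = 1" and nn: "\<And>x. 0 \<le> \<pi>0 x" using \<pi>0 by (auto simp: prob_dist_def)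
  have "state_dist a i - \<pi> i = (\<Sum>x\<in>UNIV. \<pi>0 x * (mat_pow Q a $ x $ i - \<pi> i))"
    by (simp add: state_dist_def right_diff_distrib sum_subtractf s1 flip: sum_distrib_right)
  also have "\<bar>\<dots>\<bar> \<le> (\<Sum>x\<in>UNIV. \<pi>0 x * (C * \<rho> ^ a))"
    by (rule order_trans[OF sum_abs], rule sum_mono) (use d nn in \<open>auto simp: abs_mult intro: mult_left_mono\<close>)
  also have "\<dots> = C * \<rho> ^ a" by (simp add: s1 flip: sum_distrib_right)
  finally show ?thesis .
qed

lemma dP_form_add_const: "dP_form \<mu> (\<lambda>j. f j + a) = dP_form \<mu> f"
proof -
  have "dP_form \<mu> (\<lambda>j. f j + a) = dP_form \<mu> f + (\<Sum>i\<in>UNIV. (\<mu> i * a) *\<^sub>R (\<Sum>j\<in>UNIV. dP i j))"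
    by (simp add: dP_form_def distrib_left scaleR_add_left sum.distrib scaleR_sum_right)
  then show ?thesis by (simp add: sum_dP)
qed

lemma dP_form_diff: "dP_form (\<lambda>i. \<mu> i - \<nu> i) f = dP_form \<mu> f - dP_form \<nu> f"
  by (simp add: dP_form_def left_diff_distrib scaleR_diff_left sum_subtractf)

lemma d\<pi>_form_add_const: "d\<pi>_form (\<lambda>j. f j + a) = d\<pi>_form f"
proof -
  have "d\<pi>_form (\<lambda>j. f j + a) = d\<pi>_form f + a *\<^sub>R (\<Sum>j\<in>UNIV. d\<pi> j)"
    by (simp add: d\<pi>_form_def scaleR_add_left sum.distrib scaleR_sum_right)
  then show ?thesis by (simp add: sum_d\<pi>)
qed

lemma d\<pi>_form_eq: "d\<pi>_form f = dP_form \<pi> f + d\<pi>_form (mat_act Q f)"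
proof -
  have "d\<pi>_form (mat_act Q f) = (\<Sum>j\<in>UNIV. f j *\<^sub>R (\<Sum>i\<in>UNIV. Q $ i $ j *\<^sub>R d\<pi> i))"
    unfolding d\<pi>_form_def mat_act_def scaleR_sum_left scaleR_sum_right
    by (subst sum.swap) (simp add: mult.commute)
  moreover have "dP_form \<pi> f = (\<Sum>j\<in>UNIV. f j *\<^sub>R (\<Sum>i\<in>UNIV. \<pi> i *\<^sub>R dP i j))"
    unfolding dP_form_def scaleR_sum_right by (subst sum.swap) (simp add: mult.commute)
  moreover have "d\<pi>_form f = (\<Sum>j\<in>UNIV. f j *\<^sub>R (\<Sum>i\<in>UNIV. \<pi> i *\<^sub>R dP i j) + f j *\<^sub>R (\<Sum>i\<in>UNIV. Q $ i $ j *\<^sub>R d\<pi> i))"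
    unfolding d\<pi>_form_def by (subst d\<pi>_eq) (simp add: sum.distrib scaleR_add_right)
  ultimately show ?thesis by (simp add: sum.distrib)
qed

text \<open>Unrolling \<open>d\<pi>_eq\<close> \<open>B\<close> times: the sensitivity of the average cost is a sum of one-step
  sensitivities of the centred costs, plus a remainder that decays geometrically in \<open>B\<close>.\<close>
lemma grad_cost_expansion:
  "grad (\<lambda>t. \<Sum>x\<in>UNIV. c x * stat_dist (P t) x) \<theta>
     = (\<Sum>b<B. dP_form \<pi> (centered_cost b)) + d\<pi>_form (centered_cost B)"
proof (induction B)
  case 0
  have "centered_cost 0 = (\<lambda>j. c j + - avg_cost)"
    by (rule ext) (simp add: centered_cost_def mat_act_mat_1)
  then have "d\<pi>_form (centered_cost 0) = d\<pi>_form c" by (simp only: d\<pi>_form_add_const)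
  then show ?case by (simp add: grad_cost d\<pi>_form_def)
next
  case (Suc B)
  have "mat_act Q (centered_cost B) = centered_cost (Suc B)" by (rule ext) (rule mat_act_centered_cost)
  then show ?case using Suc d\<pi>_form_eq[of "centered_cost B"] by simp
qed

lemma path_expect_dlogP_step:
  "path_expect \<pi>0 Q (Suc n) (\<lambda>xs. f (xs ! Suc n) *\<^sub>R dlogP (xs ! n) (xs ! Suc n))
     = path_expect \<pi>0 Q n (\<lambda>xs. \<Sum>y\<in>UNIV. f y *\<^sub>R dP (xs ! n) y)"
  unfolding path_expect_Suc
proof (rule path_expect_cong)
  fix xs :: "'x list" assume "xs \<in> paths n"
  then have "length xs = Suc n" by (simp add: paths_def)
  moreover have "Q $ i $ y *\<^sub>R (f y *\<^sub>R dlogP i y) = f y *\<^sub>R dP i y" for i y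
    by (simp only: scaleR_left_commute[of "Q $ i $ y"] Q_scaleR_dlogP)
  ultimately show "(\<Sum>y\<in>UNIV. Q $ (xs ! n) $ y *\<^sub>R (f ((xs @ [y]) ! Suc n) *\<^sub>R dlogP ((xs @ [y]) ! n) ((xs @ [y]) ! Suc n)))
      = (\<Sum>y\<in>UNIV. f y *\<^sub>R dP (xs ! n) y)"
    by (simp add: nth_append)
qed

lemma path_expect_cost_dlogP:
  assumes "1 \<le> m" "m \<le> k" "k \<le> N"
  shows "path_expect \<pi>0 Q N (\<lambda>xs. c (xs ! k) *\<^sub>R dlogP (xs ! (m - 1)) (xs ! m))
    = dP_form (state_dist (m - 1)) (mat_act (mat_pow Q (k - m)) c)"
proof -
  obtain n where m: "m = Suc n" using assms(1) by (cases m) auto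
  define f where "f = mat_act (mat_pow Q (k - m)) c"
  have "path_expect \<pi>0 Q N (\<lambda>xs. c (xs ! k) *\<^sub>R dlogP (xs ! (m - 1)) (xs ! m))
      = path_expect \<pi>0 Q k (\<lambda>xs. c (xs ! k) *\<^sub>R dlogP (xs ! (m - 1)) (xs ! m))"
    using assms by (intro path_expect_prefix[OF transition_Q \<pi>0]) (auto simp: depends_on_prefix_def)
  also have "\<dots> = path_expect \<pi>0 Q m (\<lambda>xs. f (xs ! m) *\<^sub>R dlogP (xs ! (m - 1)) (xs ! m))"
    unfolding f_def using assms by (intro path_expect_last_state) (auto simp: depends_on_prefix_def)
  also have "\<dots> = path_expect \<pi>0 Q n (\<lambda>xs. \<Sum>y\<in>UNIV. f y *\<^sub>R dP (xs ! n) y)"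
    unfolding m by (simp add: path_expect_dlogP_step)
  also have "\<dots> = (\<Sum>i\<in>UNIV. state_dist n i *\<^sub>R (\<Sum>y\<in>UNIV. f y *\<^sub>R dP i y))"
    using path_expect_state[of \<pi>0 Q n "\<lambda>i. \<Sum>y\<in>UNIV. f y *\<^sub>R dP i y"] by (simp add: state_dist_def)
  also have "\<dots> = dP_form (state_dist n) f"
    by (simp add: dP_form_def scaleR_sum_right mult.commute)
  finally show ?thesis by (simp add: m f_def)
qed

lemma path_expect_sf_estimator:
  "path_expect \<pi>0 Q N (sf_estimator P \<theta> c N)
     = (1 / real N) *\<^sub>R (\<Sum>k\<in>{1..N}. \<Sum>m\<in>{1..k}. dP_form (state_dist (m - 1)) (mat_act (mat_pow Q (k - m)) c))"
proof -
  have "path_expect \<pi>0 Q N (sf_estimator P \<theta> c N)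
      = (1 / real N) *\<^sub>R path_expect \<pi>0 Q N
          (\<lambda>xs. \<Sum>k\<in>{1..N}. \<Sum>m\<in>{1..k}. c (xs ! k) *\<^sub>R dlogP (xs ! (m - 1)) (xs ! m))"
    unfolding path_expect_scaleR[symmetric]
    by (intro path_expect_cong) (simp add: sf_estimator_def score_eq scaleR_sum_right)
  also have "path_expect \<pi>0 Q N (\<lambda>xs. \<Sum>k\<in>{1..N}. \<Sum>m\<in>{1..k}. c (xs ! k) *\<^sub>R dlogP (xs ! (m - 1)) (xs ! m))
      = (\<Sum>k\<in>{1..N}. \<Sum>m\<in>{1..k}. dP_form (state_dist (m - 1)) (mat_act (mat_pow Q (k - m)) c))"
    unfolding path_expect_sum by (intro sum.cong refl path_expect_cost_dlogP) auto
  finally show ?thesis .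
qed

definition dP_norm :: real where
  "dP_norm = (\<Sum>i\<in>UNIV. \<Sum>j\<in>UNIV. norm (dP i j))"

definition d\<pi>_norm :: real where
  "d\<pi>_norm = (\<Sum>j\<in>UNIV. norm (d\<pi> j))"

lemma norm_dP_form_le:
  assumes "\<And>i. \<bar>\<mu> i\<bar> \<le> \<alpha>" "\<And>j. \<bar>f j\<bar> \<le> \<beta>"
  shows "norm (dP_form \<mu> f) \<le> \<alpha> * \<beta> * dP_norm"
proof -
  have "norm (dP_form \<mu> f) \<le> (\<Sum>i\<in>UNIV. \<Sum>j\<in>UNIV. norm ((\<mu> i * f j) *\<^sub>R dP i j))"
    unfolding dP_form_def by (rule order_trans[OF norm_sum], rule sum_mono, rule norm_sum)
  also have "\<dots> \<le> (\<Sum>i\<in>UNIV. \<Sum>j\<in>UNIV. (\<alpha> * \<beta>) * norm (dP i j))"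
  proof (intro sum_mono)
    fix i j
    have "\<bar>\<mu> i * f j\<bar> \<le> \<alpha> * \<beta>"
      unfolding abs_mult using assms by (intro mult_mono) (auto intro: order_trans[OF abs_ge_zero])
    then show "norm ((\<mu> i * f j) *\<^sub>R dP i j) \<le> (\<alpha> * \<beta>) * norm (dP i j)"
      by (simp add: mult_right_mono)
  qed
  also have "\<dots> = \<alpha> * \<beta> * dP_norm" by (simp add: dP_norm_def sum_distrib_left)
  finally show ?thesis .
qed

lemma norm_d\<pi>_form_le:
  assumes "\<And>j. \<bar>f j\<bar> \<le> \<beta>"
  shows "norm (d\<pi>_form f) \<le> \<beta> * d\<pi>_norm"
proof -
  have "norm (d\<pi>_form f) \<le> (\<Sum>j\<in>UNIV. norm (f j *\<^sub>R d\<pi> j))" unfolding d\<pi>_form_def by (rule norm_sum)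
  also have "\<dots> \<le> (\<Sum>j\<in>UNIV. \<beta> * norm (d\<pi> j))"
    by (rule sum_mono) (use assms in \<open>auto intro: mult_right_mono\<close>)
  also have "\<dots> = \<beta> * d\<pi>_norm" by (simp add: d\<pi>_norm_def sum_distrib_left)
  finally show ?thesis .
qed

text \<open>The \<open>k\<close>-th summand of the expected estimator differs from the gradient only through
  the transient of the initial distribution and the truncation of \<open>grad_cost_expansion\<close> at \<open>k\<close>.\<close>
lemma expected_summand_minus_grad_eq:
  "(\<Sum>m\<in>{1..k}. dP_form (state_dist (m - 1)) (mat_act (mat_pow Q (k - m)) c))
      - grad (\<lambda>t. \<Sum>x\<in>UNIV. c x * stat_dist (P t) x) \<theta>
    = (\<Sum>a<k. dP_form (\<lambda>i. state_dist a i - \<pi> i) (centered_cost (k - Suc a))) - d\<pi>_form (centered_cost k)"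
proof -
  have "mat_act (mat_pow Q b) c = (\<lambda>j. centered_cost b j + avg_cost)" for b
    by (simp add: centered_cost_def)
  then have split: "dP_form (state_dist a) (mat_act (mat_pow Q b) c)
      = dP_form \<pi> (centered_cost b) + dP_form (\<lambda>i. state_dist a i - \<pi> i) (centered_cost b)" for a b
    by (simp add: dP_form_add_const dP_form_diff)
  have "(\<Sum>m\<in>{1..k}. dP_form (state_dist (m - 1)) (mat_act (mat_pow Q (k - m)) c))
      = (\<Sum>a<k. dP_form (state_dist a) (mat_act (mat_pow Q (k - Suc a)) c))"
    by (simp add: sum.atLeast1_atMost_eq)
  also have "\<dots> = (\<Sum>a<k. dP_form \<pi> (centered_cost (k - Suc a)))
      + (\<Sum>a<k. dP_form (\<lambda>i. state_dist a i - \<pi> i) (centered_cost (k - Suc a)))"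
    unfolding split sum.distrib ..
  also have "(\<Sum>a<k. dP_form \<pi> (centered_cost (k - Suc a))) = (\<Sum>b<k. dP_form \<pi> (centered_cost b))"
    by (rule sum.nat_diff_reindex)
  finally show ?thesis unfolding grad_cost_expansion[of k] by simp
qed

lemma norm_expected_summand_minus_grad_le:
  "norm ((\<Sum>m\<in>{1..k}. dP_form (state_dist (m - 1)) (mat_act (mat_pow Q (k - m)) c))
      - grad (\<lambda>t. \<Sum>x\<in>UNIV. c x * stat_dist (P t) x) \<theta>)
    \<le> (C * C * (2 * c_norm) * dP_norm) * (real k * \<rho> ^ (k - 1)) + (C * (2 * c_norm) * d\<pi>_norm) * \<rho> ^ k"
proof -
  let ?A = "C * C * (2 * c_norm) * dP_norm"
  have "norm (dP_form (\<lambda>i. state_dist a i - \<pi> i) (centered_cost (k - Suc a))) \<le> ?A * \<rho> ^ (k - 1)"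
    if "a < k" for a
  proof -
    have "norm (dP_form (\<lambda>i. state_dist a i - \<pi> i) (centered_cost (k - Suc a)))
        \<le> (C * \<rho> ^ a) * (C * \<rho> ^ (k - Suc a) * (2 * c_norm)) * dP_norm"
      by (rule norm_dP_form_le) (rule abs_state_dist_diff_le, rule abs_centered_cost_le)
    also have "\<dots> = ?A * \<rho> ^ (a + (k - Suc a))" by (simp add: power_add)
    also have "a + (k - Suc a) = k - 1" using that by simp
    finally show ?thesis .
  qed
  then have "(\<Sum>a<k. norm (dP_form (\<lambda>i. state_dist a i - \<pi> i) (centered_cost (k - Suc a))))
      \<le> (\<Sum>a<k. ?A * \<rho> ^ (k - 1))"
    by (intro sum_mono) simp
  also have "\<dots> = ?A * (real k * \<rho> ^ (k - 1))" by simp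
  finally have "norm (\<Sum>a<k. dP_form (\<lambda>i. state_dist a i - \<pi> i) (centered_cost (k - Suc a)))
      \<le> ?A * (real k * \<rho> ^ (k - 1))"
    by (rule order_trans[OF norm_sum])
  moreover have "norm (d\<pi>_form (centered_cost k)) \<le> (C * (2 * c_norm) * d\<pi>_norm) * \<rho> ^ k"
    using norm_d\<pi>_form_le[OF abs_centered_cost_le] by (simp add: mult_ac)
  ultimately show ?thesis
    unfolding expected_summand_minus_grad_eq by (rule order_trans[OF norm_triangle_ineq4 add_mono])
qed

lemma bias_bound:
  "\<exists>K. \<forall>N\<ge>1.
    norm (path_expect \<pi>0 Q N (sf_estimator P \<theta> c N) - grad (\<lambda>t. \<Sum>x\<in>UNIV. c x * stat_dist (P t) x) \<theta>)
      \<le> K / real N"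
proof -
  let ?G = "grad (\<lambda>t. \<Sum>x\<in>UNIV. c x * stat_dist (P t) x) \<theta>"
  define A where "A = C * C * (2 * c_norm) * dP_norm"
  define B where "B = C * (2 * c_norm) * d\<pi>_norm"
  have "0 \<le> dP_norm" "0 \<le> d\<pi>_norm" by (simp_all add: dP_norm_def d\<pi>_norm_def sum_nonneg)
  then have AB: "0 \<le> A" "0 \<le> B" using C_\<rho> c_norm_nonneg by (simp_all add: A_def B_def)
  have "norm (path_expect \<pi>0 Q N (sf_estimator P \<theta> c N) - ?G) \<le> (A / (1 - \<rho>)\<^sup>2 + B / (1 - \<rho>)) / real N"
    if N: "1 \<le> N" for N
  proof -
    define S where "S k = (\<Sum>m\<in>{1..k}. dP_form (state_dist (m - 1)) (mat_act (mat_pow Q (k - m)) c))" for k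
    have "(\<Sum>k\<in>{1..N}. ?G) = real N *\<^sub>R ?G" by (simp only: sum_constant_scaleR) simp
    then have "path_expect \<pi>0 Q N (sf_estimator P \<theta> c N) - ?G = (1 / real N) *\<^sub>R (\<Sum>k\<in>{1..N}. S k - ?G)"
      using N by (simp add: path_expect_sf_estimator S_def sum_subtractf scaleR_diff_right)
    then have eq: "norm (path_expect \<pi>0 Q N (sf_estimator P \<theta> c N) - ?G) = norm (\<Sum>k\<in>{1..N}. S k - ?G) / real N"
      by simp
    have "norm (\<Sum>k\<in>{1..N}. S k - ?G) \<le> (\<Sum>k\<in>{1..N}. A * (real k * \<rho> ^ (k - 1)) + B * \<rho> ^ k)"
      unfolding S_def A_def B_def
      by (rule order_trans[OF norm_sum], rule sum_mono, rule norm_expected_summand_minus_grad_le)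
    also have "\<dots> = A * (\<Sum>k\<in>{1..N}. real k * \<rho> ^ (k - 1)) + B * (\<Sum>k\<in>{1..N}. \<rho> ^ k)"
      by (simp add: sum.distrib sum_distrib_left)
    also have "\<dots> \<le> A * (1 / (1 - \<rho>)\<^sup>2) + B * (1 / (1 - \<rho>))"
      using C_\<rho> AB by (intro add_mono mult_left_mono sum_atLeast1_mult_power_le sum_atLeast1_power_le) auto
    finally show ?thesis unfolding eq by (simp add: divide_right_mono)
  qed
  then show ?thesis by blast
qed


section \<open>Variance of the score function estimator\<close>

text \<open>\<open>poisson n\<close> truncates the series \<open>\<Sum>l. Q\<^sup>l (c - avg_cost)\<close> solving the Poisson equation
  \<open>h - Q h = c - avg_cost\<close>; the truncation satisfies the equation exactly with a shifted index.\<close>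
definition poisson :: "nat \<Rightarrow> 'x \<Rightarrow> real" where
  "poisson n j = (\<Sum>l\<le>n. centered_cost l j)"

definition poisson_bound :: real where
  "poisson_bound = C * (2 * c_norm) / (1 - \<rho>)"

lemma poisson_0: "poisson 0 z = c z - avg_cost"
  by (simp add: poisson_def centered_cost_def mat_act_mat_1)

lemma poisson_Suc: "poisson (Suc n) z = c z - avg_cost + mat_act Q (poisson n) z"
proof -
  have "poisson (Suc n) z = centered_cost 0 z + (\<Sum>l\<le>n. centered_cost (Suc l) z)"
    unfolding poisson_def by (rule sum.atMost_Suc_shift)
  also have "(\<Sum>l\<le>n. centered_cost (Suc l) z) = mat_act Q (poisson n) z"
    unfolding poisson_def mat_act_sum by (simp add: mat_act_centered_cost)
  finally show ?thesis by (simp add: centered_cost_def mat_act_mat_1)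
qed

lemma abs_poisson_le: "\<bar>poisson n j\<bar> \<le> poisson_bound"
proof -
  have "\<bar>poisson n j\<bar> \<le> (\<Sum>l\<le>n. C * \<rho> ^ l * (2 * c_norm))"
    unfolding poisson_def by (rule order_trans[OF sum_abs], rule sum_mono, rule abs_centered_cost_le)
  also have "\<dots> = C * (2 * c_norm) * (\<Sum>l<Suc n. \<rho> ^ l)"
    by (simp add: sum_distrib_left lessThan_Suc_atMost mult_ac)
  also have "(\<Sum>l<Suc n. \<rho> ^ l) = (1 - \<rho> ^ Suc n) / (1 - \<rho>)"
    using C_\<rho> sum_gp_strict[of \<rho> "Suc n"] by simp
  also have "C * (2 * c_norm) * ((1 - \<rho> ^ Suc n) / (1 - \<rho>)) \<le> C * (2 * c_norm) * (1 / (1 - \<rho>))"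
    using C_\<rho> c_norm_nonneg by (intro mult_left_mono divide_right_mono) auto
  finally show ?thesis by (simp add: poisson_bound_def)
qed

lemma poisson_bound_nonneg: "0 \<le> poisson_bound"
  using abs_poisson_le[of 0 undefined] by linarith

lemma abs_mat_act_poisson_le: "\<bar>mat_act Q (poisson n) j\<bar> \<le> poisson_bound"
proof -
  have lo: "- poisson_bound \<le> poisson n i" and hi: "poisson n i \<le> poisson_bound" for i
    using abs_poisson_le[of n i] by linarith+
  have "- poisson_bound \<le> mat_act Q (poisson n) j" "mat_act Q (poisson n) j \<le> poisson_bound"
    using mat_act_bounds[OF transition_Q, of "- poisson_bound" "poisson n" poisson_bound j, OF lo hi] .
  then show ?thesis by (simp add: abs_le_iff)
qed

definition dlogP_norm :: real where
  "dlogP_norm = (\<Sum>i\<in>UNIV. \<Sum>j\<in>UNIV. norm (dlogP i j))"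

lemma norm_dlogP_le: "norm (dlogP i j) \<le> dlogP_norm"
proof -
  have "norm (dlogP i j) \<le> (\<Sum>j\<in>UNIV. norm (dlogP i j))" by (rule member_le_sum) auto
  also have "\<dots> \<le> dlogP_norm"
    unfolding dlogP_norm_def by (rule member_le_sum[of i]) (auto intro: sum_nonneg)
  finally show ?thesis .
qed

lemma dlogP_norm_nonneg: "0 \<le> dlogP_norm"
  using norm_dlogP_le[of undefined undefined] norm_ge_zero order_trans by blast

lemma norm_score_le: "norm (score P \<theta> xs k) \<le> real k * dlogP_norm"
proof -
  have "norm (score P \<theta> xs k) \<le> (\<Sum>m\<in>{1..k}. dlogP_norm)"
    unfolding score_eq by (rule order_trans[OF norm_sum], rule sum_mono, rule norm_dlogP_le)
  then show ?thesis by simp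
qed

definition mart_inc :: "nat \<Rightarrow> 'x list \<Rightarrow> nat \<Rightarrow> real" where
  "mart_inc N xs k = poisson (N - k) (xs ! k) - mat_act Q (poisson (N - k)) (xs ! (k - 1))"

definition score_mart :: "nat \<Rightarrow> 'x list \<Rightarrow> real^'p" where
  "score_mart N xs = (\<Sum>m\<in>{1..N}. (real (Suc N - m) * avg_cost) *\<^sub>R dlogP (xs ! (m - 1)) (xs ! m))"

definition poisson_term :: "nat \<Rightarrow> 'x list \<Rightarrow> real^'p" where
  "poisson_term N xs = (\<Sum>m\<in>{1..N}. poisson (N - m) (xs ! m) *\<^sub>R dlogP (xs ! (m - 1)) (xs ! m))"

definition inc_mart :: "nat \<Rightarrow> 'x list \<Rightarrow> real^'p" where
  "inc_mart N xs = (\<Sum>k\<in>{1..N}. mart_inc N xs k *\<^sub>R score P \<theta> xs (k - 1))"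

lemma sum_cost_score_decomp:
  "(\<Sum>k\<in>{1..N}. c (xs ! k) *\<^sub>R score P \<theta> xs k) = score_mart N xs + poisson_term N xs + inc_mart N xs"
proof -
  define v where "v m = dlogP (xs ! (m - 1)) (xs ! m)" for m
  have "(\<Sum>k\<in>{1..N}. c (xs ! k) *\<^sub>R score P \<theta> xs k) = (\<Sum>m\<in>{1..N}. (\<Sum>k\<in>{m..N}. c (xs ! k)) *\<^sub>R v m)"
    unfolding score_eq v_def by (rule sum_scaleR_partial_sums)
  also have "\<dots> = (\<Sum>m\<in>{1..N}. (real (Suc N - m) * avg_cost + poisson (N - m) (xs ! m)
      + (\<Sum>k\<in>{Suc m..N}. mart_inc N xs k)) *\<^sub>R v m)"
    unfolding mart_inc_def
    by (intro sum.cong refl, subst sum_cost_telescope[of poisson c avg_cost "\<lambda>n. mat_act Q (poisson n)"])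
      (auto simp: poisson_0 poisson_Suc)
  also have "\<dots> = score_mart N xs + poisson_term N xs + (\<Sum>m\<in>{1..N}. (\<Sum>k\<in>{Suc m..N}. mart_inc N xs k) *\<^sub>R v m)"
    unfolding score_mart_def poisson_term_def v_def by (simp add: scaleR_add_left sum.distrib)
  also have "(\<Sum>m\<in>{1..N}. (\<Sum>k\<in>{Suc m..N}. mart_inc N xs k) *\<^sub>R v m) = inc_mart N xs"
    unfolding inc_mart_def score_eq v_def by (rule sum_scaleR_strict_partial_sums[symmetric])
  finally show ?thesis .
qed


lemma path_expect_norm_sq_score_mart_le:
  "path_expect \<pi>0 Q N (\<lambda>xs. (norm (score_mart N xs))\<^sup>2) \<le> real N * (\<bar>avg_cost\<bar> * real N * dlogP_norm)\<^sup>2"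
proof -
  define Y where "Y k xs = (real (Suc N - k) * avg_cost) *\<^sub>R dlogP (xs ! (k - 1)) (xs ! k)" for k xs
  have "score_mart N xs = (\<Sum>k\<in>{1..N}. Y k xs)" for xs by (simp add: Y_def score_mart_def)
  moreover have "path_expect \<pi>0 Q N (\<lambda>xs. (norm (\<Sum>k\<in>{1..N}. Y k xs))\<^sup>2)
      \<le> real N * (\<bar>avg_cost\<bar> * real N * dlogP_norm)\<^sup>2"
  proof (rule path_expect_norm_sq_martingale_le[OF transition_Q \<pi>0])
    show "depends_on_prefix k (Y k)" for k by (simp add: depends_on_prefix_def Y_def)
    show "(\<Sum>y\<in>UNIV. Q $ (xs ! n) $ y *\<^sub>R Y (Suc n) (xs @ [y])) = 0" if "length xs = Suc n" for n xs
    proof -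
      have "(\<Sum>y\<in>UNIV. Q $ (xs ! n) $ y *\<^sub>R Y (Suc n) (xs @ [y]))
          = (real (Suc N - Suc n) * avg_cost) *\<^sub>R (\<Sum>y\<in>UNIV. Q $ (xs ! n) $ y *\<^sub>R dlogP (xs ! n) y)"
        using that by (simp add: Y_def nth_append scaleR_sum_right mult_ac)
      then show ?thesis by (simp add: Q_scaleR_dlogP sum_dP)
    qed
    show "norm (Y k xs) \<le> \<bar>avg_cost\<bar> * real N * dlogP_norm" if "1 \<le> k" for k xs
    proof -
      have "norm (Y k xs) = real (Suc N - k) * \<bar>avg_cost\<bar> * norm (dlogP (xs ! (k - 1)) (xs ! k))"
        by (simp add: Y_def abs_mult)
      also have "\<dots> \<le> real N * \<bar>avg_cost\<bar> * dlogP_norm"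
        using that norm_dlogP_le dlogP_norm_nonneg by (intro mult_mono) auto
      finally show ?thesis by (simp add: mult_ac)
    qed
  qed
  ultimately show ?thesis by simp
qed

lemma abs_mart_inc_le: "\<bar>mart_inc N xs k\<bar> \<le> 2 * poisson_bound"
  using abs_poisson_le[of "N - k" "xs ! k"] abs_mat_act_poisson_le[of "N - k" "xs ! (k - 1)"]
  unfolding mart_inc_def by linarith

lemma mart_inc_cond_mean:
  assumes "length xs = Suc n" "Suc n \<le> N"
  shows "(\<Sum>y\<in>UNIV. Q $ (xs ! n) $ y * mart_inc N (xs @ [y]) (Suc n)) = 0"
proof -
  have "(\<Sum>y\<in>UNIV. Q $ (xs ! n) $ y * mart_inc N (xs @ [y]) (Suc n))
      = mat_act Q (poisson (N - Suc n)) (xs ! n)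
        - (\<Sum>y\<in>UNIV. Q $ (xs ! n) $ y) * mat_act Q (poisson (N - Suc n)) (xs ! n)"
    using assms(1) by (simp add: mart_inc_def nth_append right_diff_distrib sum_subtractf mat_act_def
        sum_distrib_right)
  then show ?thesis using transition_Q by (simp add: transition_matrix_def)
qed

lemma path_expect_norm_sq_inc_mart_le:
  "path_expect \<pi>0 Q N (\<lambda>xs. (norm (inc_mart N xs))\<^sup>2) \<le> real N * (2 * poisson_bound * (real N * dlogP_norm))\<^sup>2"
proof -
  define Y where "Y k xs = (if k \<le> N then mart_inc N xs k *\<^sub>R score P \<theta> xs (k - 1) else 0)" for k xs
  have "inc_mart N xs = (\<Sum>k\<in>{1..N}. Y k xs)" for xs by (simp add: Y_def inc_mart_def)
  moreover have "path_expect \<pi>0 Q N (\<lambda>xs. (norm (\<Sum>k\<in>{1..N}. Y k xs))\<^sup>2)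
      \<le> real N * (2 * poisson_bound * (real N * dlogP_norm))\<^sup>2"
  proof (rule path_expect_norm_sq_martingale_le[OF transition_Q \<pi>0])
    show "depends_on_prefix k (Y k)" for k
      by (auto simp: depends_on_prefix_def Y_def mart_inc_def score_take)
    show "(\<Sum>y\<in>UNIV. Q $ (xs ! n) $ y *\<^sub>R Y (Suc n) (xs @ [y])) = 0" if l: "length xs = Suc n" for n xs
    proof (cases "Suc n \<le> N")
      case True
      then have "(\<Sum>y\<in>UNIV. Q $ (xs ! n) $ y *\<^sub>R Y (Suc n) (xs @ [y]))
          = (\<Sum>y\<in>UNIV. Q $ (xs ! n) $ y * mart_inc N (xs @ [y]) (Suc n)) *\<^sub>R score P \<theta> xs n"
        using l by (simp add: Y_def score_snoc scaleR_sum_left)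
      then show ?thesis using mart_inc_cond_mean[OF l True] by simp
    qed (simp add: Y_def)
    show "norm (Y k xs) \<le> 2 * poisson_bound * (real N * dlogP_norm)" for k xs
    proof (cases "k \<le> N")
      case True
      have "real (k - 1) * dlogP_norm \<le> real N * dlogP_norm"
        using True dlogP_norm_nonneg by (intro mult_right_mono) auto
      then have "norm (score P \<theta> xs (k - 1)) \<le> real N * dlogP_norm"
        using norm_score_le[of xs "k - 1"] by linarith
      then show ?thesis using True abs_mart_inc_le poisson_bound_nonneg
        by (simp add: Y_def mult_mono)
    qed (simp add: Y_def poisson_bound_nonneg dlogP_norm_nonneg)
  qed
  ultimately show ?thesis by simp
qed

lemma norm_poisson_term_le: "norm (poisson_term N xs) \<le> real N * (poisson_bound * dlogP_norm)"
proof -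
  have "norm (poisson_term N xs) \<le> (\<Sum>m\<in>{1..N}. poisson_bound * dlogP_norm)"
    unfolding poisson_term_def
    by (rule order_trans[OF norm_sum], rule sum_mono)
      (simp add: mult_mono[OF abs_poisson_le norm_dlogP_le poisson_bound_nonneg norm_ge_zero])
  then show ?thesis by simp
qed

lemma path_expect_norm_sq_sum_cost_score_le:
  assumes "1 \<le> N"
  shows "path_expect \<pi>0 Q N (\<lambda>xs. (norm (\<Sum>k\<in>{1..N}. c (xs ! k) *\<^sub>R score P \<theta> xs k))\<^sup>2)
    \<le> 3 * ((\<bar>avg_cost\<bar> * dlogP_norm)\<^sup>2 + (poisson_bound * dlogP_norm)\<^sup>2 + (2 * poisson_bound * dlogP_norm)\<^sup>2)
        * real N ^ 3"
proof -
  let ?E = "\<lambda>F. path_expect \<pi>0 Q N (\<lambda>xs. (norm (F N xs))\<^sup>2)"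
  have "path_expect \<pi>0 Q N (\<lambda>xs. (norm (\<Sum>k\<in>{1..N}. c (xs ! k) *\<^sub>R score P \<theta> xs k))\<^sup>2)
      \<le> path_expect \<pi>0 Q N (\<lambda>xs. 3 * ((norm (score_mart N xs))\<^sup>2 + (norm (poisson_term N xs))\<^sup>2
            + (norm (inc_mart N xs))\<^sup>2))"
    unfolding sum_cost_score_decomp by (rule path_expect_mono[OF transition_Q \<pi>0] power2_norm_add3_le)+
  also have "\<dots> = 3 * (?E score_mart + ?E poisson_term + ?E inc_mart)"
    by (simp add: path_expect_mult path_expect_add)
  also have "?E poisson_term \<le> (real N * (poisson_bound * dlogP_norm))\<^sup>2"
    by (rule path_expect_le_const[OF transition_Q \<pi>0]) (intro power_mono norm_poisson_term_le norm_ge_zero)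
  also have "(real N * (poisson_bound * dlogP_norm))\<^sup>2 \<le> real N * (real N * (poisson_bound * dlogP_norm))\<^sup>2"
    using assms by (simp add: mult_le_cancel_right1 power2_eq_square)
  finally have "path_expect \<pi>0 Q N (\<lambda>xs. (norm (\<Sum>k\<in>{1..N}. c (xs ! k) *\<^sub>R score P \<theta> xs k))\<^sup>2)
      \<le> 3 * (real N * (\<bar>avg_cost\<bar> * real N * dlogP_norm)\<^sup>2 + real N * (real N * (poisson_bound * dlogP_norm))\<^sup>2
        + real N * (2 * poisson_bound * (real N * dlogP_norm))\<^sup>2)"
    using path_expect_norm_sq_score_mart_le[of N] path_expect_norm_sq_inc_mart_le[of N] by simp
  then show ?thesis by (simp add: power2_eq_square power3_eq_cube algebra_simps)
qed

lemma variance_bound: "\<exists>K. \<forall>N\<ge>1. trace_cov \<pi>0 Q N (sf_estimator P \<theta> c N) \<le> K * real N"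
proof -
  define K where "K = 3 * ((\<bar>avg_cost\<bar> * dlogP_norm)\<^sup>2 + (poisson_bound * dlogP_norm)\<^sup>2
    + (2 * poisson_bound * dlogP_norm)\<^sup>2)"
  have "trace_cov \<pi>0 Q N (sf_estimator P \<theta> c N) \<le> K * real N" if N: "1 \<le> N" for N
  proof -
    have "path_expect \<pi>0 Q N (\<lambda>xs. (norm (sf_estimator P \<theta> c N xs))\<^sup>2)
        = (1 / real N)\<^sup>2 * path_expect \<pi>0 Q N (\<lambda>xs. (norm (\<Sum>k\<in>{1..N}. c (xs ! k) *\<^sub>R score P \<theta> xs k))\<^sup>2)"
      unfolding path_expect_mult[symmetric] sf_estimator_def
      by (intro path_expect_cong) (simp add: power_divide)
    also have "\<dots> \<le> (1 / real N)\<^sup>2 * (K * real N ^ 3)"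
      unfolding K_def by (intro mult_left_mono path_expect_norm_sq_sum_cost_score_le N) simp
    also have "\<dots> = K * real N" using N by (simp add: power2_eq_square power3_eq_cube)
    finally show ?thesis
      using trace_cov_le_second_moment[OF transition_Q \<pi>0, of N "sf_estimator P \<theta> c N"] by simp
  qed
  then show ?thesis by blast
qed

end

theorem theorem2p3:
  fixes P :: "real^'p \<Rightarrow> real^'x::finite^'x"
    and U :: "(real^'p) set"
    and c :: "'x \<Rightarrow> real"
    and \<pi>0 :: "'x \<Rightarrow> real"
    and \<theta> :: "real^'p"
  assumes "open U"
    and "\<And>t. t \<in> U \<Longrightarrow> transition_matrix (P t)"
    and "\<And>t. t \<in> U \<Longrightarrow> regular (P t)"
    and "\<And>i j. C1_on (\<lambda>t. P t $ i $ j) U"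
    and "\<And>t i j. t \<in> U \<Longrightarrow> P t $ i $ j = 0 \<Longrightarrow> grad (\<lambda>s. P s $ i $ j) t = 0"
    and "prob_dist \<pi>0"
    and "\<theta> \<in> U"
  shows "\<exists>K1 K2. \<forall>N\<ge>1.
      norm (path_expect \<pi>0 (P \<theta>) N (sf_estimator P \<theta> c N)
            - grad (\<lambda>t. \<Sum>x\<in>UNIV. c x * stat_dist (P t) x) \<theta>) \<le> K1 / real N
    \<and> trace_cov \<pi>0 (P \<theta>) N (sf_estimator P \<theta> c N) \<le> K2 * real N"
proof -
  interpret smooth_regular_family P U c \<pi>0 \<theta> using assms by unfold_locales
  obtain C \<rho> where "geometric_contraction (P \<theta>) C \<rho>" using geometric_contraction_at[OF \<theta>] .
  then interpret contracting_smooth_family P U c \<pi>0 \<theta> C \<rho> by unfold_locales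
  show ?thesis using bias_bound variance_bound by blast
qed

end
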